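(* Let $(M,\mathcal{C})$ be a complex Cartan space satisfying the hypothesis $A_{kr}h^{jr}=0$ of the context, and let $s\mapsto(z^k(s),\zeta_k(s))$ be a smooth curve in $\widetilde{T'^{*}M}$, all functions of $(z,\zeta)$ below being evaluated along it. Then the curve satisfies $$\frac{dz^k}{ds}=\zeta^k,\qquad \frac{d\zeta_k}{ds}-N_{jk}\frac{dz^j}{ds}=h_{jk}\Theta^{*j}\qquad(k=1,\dots,n)$$ (i.e. it is a complex geodesic curve for $\mathcal{C}$) if and only if it satisfies $$\frac{dz^k}{ds}=\zeta^k,\qquad \frac{d^2z^k}{ds^2}+H^k_{jl}\zeta^j\zeta^l=\Theta^{*k}\qquad(k=1,\dots,n).$$
   Context: $M$ is an $n$-dimensional complex manifold with local coordinates $(z^k,\zeta_k)$ on $T'^{*}M$; $\widetilde{T'^{*}M}$ is the complement of the zero section. A complex Cartan space $(M,\mathcal{C})$: $\mathcal{C}:T'^{*}M\to[0,\infty)$ continuous, $H:=\mathcal{C}^2$ smooth on $\widetilde{T'^{*}M}$, $\mathcal{C}(z,\zeta)=0$ iff $\zeta=0$, $\mathcal{C}(z,\lambda\zeta)=|\lambda|\mathcal{C}(z,\zeta)$ for $\lambda\in\mathbb{C}$, $h^{\bar ji}:=\frac{\partial^2H}{\partial\zeta_i\partial\bar\zeta_j}$ positive definite, inverse $h_{j\bar k}$. Summation over repeated indices; bar on an index denotes conjugation (e.g. $N_{\bar r\bar m}:=\overline{N_{rm}}$, $h_{\bar r\bar m}:=\overline{h_{rm}}$); $\dot\partial^k:=\partial/\partial\zeta_k$;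 $\zeta^k:=h^{\bar jk}\bar\zeta_j$, $\zeta^{\bar k}:=\overline{\zeta^k}$; $h^{jr}:=\frac{\partial^2H}{\partial\zeta_j\partial\zeta_r}$, $h^{\bar j\bar m}:=\overline{h^{jm}}$. Hypothesis: with $A_{kr}:=-h_{r\bar j}h_{k\bar m}h^{\bar j\bar m}$ one has $A_{kr}h^{jr}=0$ for all $j,k$; set $h_{kr}:=A_{kr}$. Chern–Cartan nonlinear connection: $N_{ji}:=-h_{j\bar k}\frac{\partial h^{\bar kl}}{\partial z^i}\zeta_l$, $\delta^*_k:=\frac{\partial}{\partial z^k}+N_{jk}\dot\partial^j$; Chern–Cartan horizontal coefficients $H^i_{jk}:=h^{\bar mi}\delta^*_k(h_{j\bar m})$. Define $\Theta^{*k}:=h^{\bar mk}(N_{\bar r\bar m}-N_{\bar m\bar r})\zeta^{\bar r}$. *)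

theory Defs
  imports "HOL-Analysis.Analysis"
begin

text \<open>Everything is written in one holomorphic coordinate chart: the chart domain of
  M is an open set U of complex n-space (the coordinates z), the fibre coordinates
  of the holomorphic cotangent bundle are zeta in complex n-space, the index set of
  coordinates is the finite type 'n.  Points of T'*M over the chart are pairs (z, zeta).\<close>

type_synonym 'n cpt = "(complex^'n) \<times> (complex^'n)"

definition dirD :: "('a::real_normed_vector \<Rightarrow> complex) \<Rightarrow> 'a \<Rightarrow> 'a \<Rightarrow> complex" where
  "dirD f p v = vector_derivative (\<lambda>t::real. f (p + t *\<^sub>R v)) (at 0)"

fun iter_dirD :: "('a::real_normed_vector \<Rightarrow> complex) \<Rightarrow> 'a list \<Rightarrow> 'a \<Rightarrow> complex" where
  "iter_dirD f [] = f"
| "iter_dirD f (v # vs) = (\<lambda>p. dirD (iter_dirD f vs) p v)"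

definition smooth_on :: "'a::real_normed_vector set \<Rightarrow> ('a \<Rightarrow> complex) \<Rightarrow> bool" where
  "smooth_on S f \<longleftrightarrow> (\<forall>vs. iter_dirD f vs differentiable_on S)"

definition wz :: "'n::finite \<Rightarrow> ('n cpt \<Rightarrow> complex) \<Rightarrow> 'n cpt \<Rightarrow> complex" where
  "wz k f p = (dirD f p (axis k 1, 0) - \<i> * dirD f p (axis k \<i>, 0)) / 2"

definition wzeta :: "'n::finite \<Rightarrow> ('n cpt \<Rightarrow> complex) \<Rightarrow> 'n cpt \<Rightarrow> complex" where
  "wzeta k f p = (dirD f p (0, axis k 1) - \<i> * dirD f p (0, axis k \<i>)) / 2"

definition wzetabar :: "'n::finite \<Rightarrow> ('n cpt \<Rightarrow> complex) \<Rightarrow> 'n cpt \<Rightarrow> complex" where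
  "wzetabar k f p = (dirD f p (0, axis k 1) + \<i> * dirD f p (0, axis k \<i>)) / 2"

definition Hf :: "(complex^'n \<Rightarrow> complex^'n \<Rightarrow> real) \<Rightarrow> 'n cpt \<Rightarrow> complex" where
  "Hf C p = complex_of_real ((C (fst p) (snd p))\<^sup>2)"

text \<open>h^{bar j i} = d^2 H / d zeta_i d zetabar_j\<close>
definition hupbar :: "(complex^'n \<Rightarrow> complex^'n \<Rightarrow> real) \<Rightarrow> 'n::finite \<Rightarrow> 'n \<Rightarrow> 'n cpt \<Rightarrow> complex" where
  "hupbar C j i p = wzeta i (wzetabar j (Hf C)) p"

definition hmat :: "(complex^'n \<Rightarrow> complex^'n \<Rightarrow> real) \<Rightarrow> 'n cpt \<Rightarrow> complex^'n^'n" where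
  "hmat C p = (\<chi> j i. hupbar C j i p)"

definition hlow :: "(complex^'n \<Rightarrow> complex^'n \<Rightarrow> real) \<Rightarrow> 'n::finite \<Rightarrow> 'n \<Rightarrow> 'n cpt \<Rightarrow> complex" where
  "hlow C j k p = matrix_inv (hmat C p) $ j $ k"

definition hupup :: "(complex^'n \<Rightarrow> complex^'n \<Rightarrow> real) \<Rightarrow> 'n::finite \<Rightarrow> 'n \<Rightarrow> 'n cpt \<Rightarrow> complex" where
  "hupup C j r p = wzeta j (wzeta r (Hf C)) p"

text \<open>A_{kr} = - h_{r bar j} h_{k bar m} h^{bar j bar m}, with h^{bar j bar m} = conj h^{jm};
  under the hypothesis of the paper h_{kr} := A_{kr}.\<close>
definition Akr :: "(complex^'n \<Rightarrow> complex^'n \<Rightarrow> real) \<Rightarrow> 'n::finite \<Rightarrow> 'n \<Rightarrow> 'n cpt \<Rightarrow> complex" where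
  "Akr C k r p = - (\<Sum>j\<in>UNIV. \<Sum>m\<in>UNIV. hlow C r j p * hlow C k m p * cnj (hupup C j m p))"

definition zetaup :: "(complex^'n \<Rightarrow> complex^'n \<Rightarrow> real) \<Rightarrow> 'n::finite \<Rightarrow> 'n cpt \<Rightarrow> complex" where
  "zetaup C k p = (\<Sum>j\<in>UNIV. hupbar C j k p * cnj (snd p $ j))"

definition Nc :: "(complex^'n \<Rightarrow> complex^'n \<Rightarrow> real) \<Rightarrow> 'n::finite \<Rightarrow> 'n \<Rightarrow> 'n cpt \<Rightarrow> complex" where
  "Nc C j i p = - (\<Sum>k\<in>UNIV. \<Sum>l\<in>UNIV. hlow C j k p * wz i (hupbar C k l) p * (snd p $ l))"

definition deltastar :: "(complex^'n \<Rightarrow> complex^'n \<Rightarrow> real) \<Rightarrow> 'n::finite \<Rightarrow> ('n cpt \<Rightarrow> complex) \<Rightarrow> 'n cpt \<Rightarrow> complex" where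
  "deltastar C k f p = wz k f p + (\<Sum>j\<in>UNIV. Nc C j k p * wzeta j f p)"

definition Hcoef :: "(complex^'n \<Rightarrow> complex^'n \<Rightarrow> real) \<Rightarrow> 'n::finite \<Rightarrow> 'n \<Rightarrow> 'n \<Rightarrow> 'n cpt \<Rightarrow> complex" where
  "Hcoef C i j k p = (\<Sum>m\<in>UNIV. hupbar C m i p * deltastar C k (hlow C j m) p)"

definition Theta :: "(complex^'n \<Rightarrow> complex^'n \<Rightarrow> real) \<Rightarrow> 'n::finite \<Rightarrow> 'n cpt \<Rightarrow> complex" where
  "Theta C k p = (\<Sum>m\<in>UNIV. \<Sum>r\<in>UNIV.
      hupbar C m k p * (cnj (Nc C r m p) - cnj (Nc C m r p)) * cnj (zetaup C r p))"

definition complex_cartan_space :: "(complex^'n::finite) set \<Rightarrow> (complex^'n \<Rightarrow> complex^'n \<Rightarrow> real) \<Rightarrow> bool" where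
  "complex_cartan_space U C \<longleftrightarrow>
     open U \<and>
     continuous_on (U \<times> UNIV) (\<lambda>p. C (fst p) (snd p)) \<and>
     (\<forall>z\<in>U. \<forall>\<zeta>. 0 \<le> C z \<zeta>) \<and>
     smooth_on (U \<times> (UNIV - {0})) (Hf C) \<and>
     (\<forall>z\<in>U. \<forall>\<zeta>. C z \<zeta> = 0 \<longleftrightarrow> \<zeta> = 0) \<and>
     (\<forall>z\<in>U. \<forall>\<zeta>. \<forall>c::complex. C z (c *s \<zeta>) = cmod c * C z \<zeta>) \<and>
     (\<forall>z\<in>U. \<forall>\<zeta>. \<zeta> \<noteq> 0 \<longrightarrow> (\<forall>v::complex^'n. v \<noteq> 0 \<longrightarrow>
        (let q = (\<Sum>i\<in>UNIV. \<Sum>j\<in>UNIV. hupbar C j i (z, \<zeta>) * v $ i * cnj (v $ j))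
         in Im q = 0 \<and> 0 < Re q)))"

definition A_hyp :: "(complex^'n::finite) set \<Rightarrow> (complex^'n \<Rightarrow> complex^'n \<Rightarrow> real) \<Rightarrow> bool" where
  "A_hyp U C \<longleftrightarrow> (\<forall>z\<in>U. \<forall>\<zeta>. \<zeta> \<noteq> 0 \<longrightarrow>
     (\<forall>j k. (\<Sum>r\<in>UNIV. Akr C k r (z, \<zeta>) * hupup C j r (z, \<zeta>)) = 0))"

end

theory Submission
  imports Defs
begin

text \<open>Both systems contain dz^k/ds = zeta^k, so they are compared along curves satisfying it.
  Positivity of h^{bar j i} turns the hypothesis A_{kr} h^{jr} = 0 into h^{jr} = 0: contracting
  with h^{bar c k} and taking c = j yields the positive definite inverse form h_{r bar a}
  evaluated at the vector (h^{jr})_r.  Hence A_{kr} = 0, the right-hand side h_{jk} Theta*^j of the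
  first system vanishes, and zeta^k, which by Euler's relation for the 2-homogeneous H equals
  dH/dzeta_k, satisfies d zeta^k/d zeta_a = 0 and d zeta^k/d zetabar_a = h^{bar a k}.
  Differentiating dz^k/ds = zeta^k along the curve with the chain rule for Wirtinger derivatives,
  and rewriting the z-derivatives of zeta^k through N and H^k_{jl}, gives
    d^2z^k/ds^2 + H^k_{jl} zeta^j zeta^l - Theta*^k = h^{bar i k} conj(d zeta_i/ds - N_{ji} dz^j/ds).
  Since h^{bar i k} is invertible, the left-hand sides vanish exactly when the first system holds.\<close>

lemma has_vector_derivative_along_line:
  fixes f :: "'a::real_normed_vector \<Rightarrow> complex"
  assumes "(f has_derivative f') (at (a + s *\<^sub>R v))"
  shows "((\<lambda>t. f (a + t *\<^sub>R v)) has_vector_derivative f' v) (at s)"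
proof -
  have l: "((\<lambda>t. a + t *\<^sub>R v) has_derivative (\<lambda>h. h *\<^sub>R v)) (at s)"
    by (auto intro!: derivative_eq_intros)
  have "((\<lambda>t. f (a + t *\<^sub>R v)) has_derivative (\<lambda>h. f' (h *\<^sub>R v))) (at s)"
    using has_derivative_compose[OF l assms] by simp
  moreover have "(\<lambda>h. f' (h *\<^sub>R v)) = (\<lambda>h. h *\<^sub>R f' v)"
    using assms has_derivative_bounded_linear bounded_linear.linear linear_scale by blast
  ultimately show ?thesis by (simp add: has_vector_derivative_def)
qed

lemma dirD_eq_derivative:
  fixes f :: "'a::real_normed_vector \<Rightarrow> complex"
  assumes "(f has_derivative f') (at q)"
  shows "dirD f q v = f' v"
proof -
  have "((\<lambda>t. f (q + t *\<^sub>R v)) has_vector_derivative f' v) (at 0)"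
    using has_vector_derivative_along_line[of f f' q 0 v] assms by simp
  then show ?thesis unfolding dirD_def by (rule vector_derivative_at)
qed

lemma has_vector_derivative_dirD:
  fixes f :: "'a::real_normed_vector \<Rightarrow> complex"
  assumes "f differentiable at (a + s *\<^sub>R v)"
  shows "((\<lambda>t. f (a + t *\<^sub>R v)) has_vector_derivative dirD f (a + s *\<^sub>R v) v) (at s)"
proof -
  obtain f' where "(f has_derivative f') (at (a + s *\<^sub>R v))" using assms differentiable_def by blast
  then show ?thesis using has_vector_derivative_along_line dirD_eq_derivative by metis
qed

lemma dirD_cong:
  fixes f :: "'a::real_normed_vector \<Rightarrow> complex"
  assumes "open S" "q \<in> S" "\<And>x. x \<in> S \<Longrightarrow> f x = g x"
  shows "dirD f q v = dirD g q v"
proof -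
  have "open {t::real. q + t *\<^sub>R v \<in> S}"
    by (rule open_vimage[of S "\<lambda>t. q + t *\<^sub>R v", simplified vimage_def]) (auto intro!: continuous_intros simp: assms)
  moreover have "(0::real) \<in> {t. q + t *\<^sub>R v \<in> S}" using assms by simp
  ultimately have "eventually (\<lambda>t. t \<in> {t. q + t *\<^sub>R v \<in> S}) (nhds 0)"
    using eventually_nhds by blast
  then have "eventually (\<lambda>t. t \<in> UNIV \<longrightarrow> f (q + t *\<^sub>R v) = g (q + t *\<^sub>R v)) (nhds 0)"
    by eventually_elim (auto simp: assms)
  then show ?thesis unfolding dirD_def by (rule vector_derivative_cong_eq) auto
qed

lemma dirD_add:
  fixes f g :: "'a::real_normed_vector \<Rightarrow> complex"
  assumes "f differentiable at q" "g differentiable at q"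
  shows "dirD (\<lambda>x. f x + g x) q v = dirD f q v + dirD g q v"
proof -
  obtain f' g' where "(f has_derivative f') (at q)" "(g has_derivative g') (at q)"
    using assms differentiable_def by metis
  then show ?thesis using has_derivative_add dirD_eq_derivative by metis
qed

lemma dirD_mult:
  fixes f g :: "'a::real_normed_vector \<Rightarrow> complex"
  assumes "f differentiable at q" "g differentiable at q"
  shows "dirD (\<lambda>x. f x * g x) q v = dirD f q v * g q + f q * dirD g q v"
proof -
  obtain f' g' where d: "(f has_derivative f') (at q)" "(g has_derivative g') (at q)"
    using assms differentiable_def by metis
  have "((\<lambda>x. f x * g x) has_derivative (\<lambda>h. f q * g' h + f' h * g q)) (at q)"
    using has_derivative_mult[OF d] .
  then show ?thesis using d dirD_eq_derivative by (metis add.commute mult.commute)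
qed

lemma dirD_const: "dirD (\<lambda>x. c) q v = 0"
  unfolding dirD_def by (simp add: vector_derivative_at)

lemma dirD_cmult:
  fixes f :: "'a::real_normed_vector \<Rightarrow> complex"
  assumes "f differentiable at q"
  shows "dirD (\<lambda>x. c * f x) q v = c * dirD f q v"
  using dirD_mult[of "\<lambda>x. c" q f v] assms by (simp add: dirD_const)

lemma dirD_cnj:
  fixes f :: "'a::real_normed_vector \<Rightarrow> complex"
  assumes "f differentiable at q"
  shows "dirD (\<lambda>x. cnj (f x)) q v = cnj (dirD f q v)"
proof -
  obtain f' where d: "(f has_derivative f') (at q)" using assms differentiable_def by metis
  have "((\<lambda>x. cnj (f x)) has_derivative (\<lambda>h. cnj (f' h))) (at q)"
    using has_derivative_cnj[OF d] .
  then show ?thesis using d dirD_eq_derivative by metis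
qed

lemma dirD_sum:
  fixes f :: "'i \<Rightarrow> 'a::real_normed_vector \<Rightarrow> complex"
  assumes "finite I" "\<And>i. i \<in> I \<Longrightarrow> f i differentiable at q"
  shows "dirD (\<lambda>x. \<Sum>i\<in>I. f i x) q v = (\<Sum>i\<in>I. dirD (f i) q v)"
  using assms
proof (induction I rule: finite_induct)
  case empty then show ?case by (simp add: dirD_const)
next
  case (insert i I)
  have "dirD (\<lambda>x. \<Sum>i\<in>insert i I. f i x) q v = dirD (\<lambda>x. f i x + (\<Sum>i\<in>I. f i x)) q v"
    using insert by simp
  also have "\<dots> = dirD (f i) q v + dirD (\<lambda>x. \<Sum>i\<in>I. f i x) q v"
    using insert by (intro dirD_add) (auto intro!: differentiable_sum)
  finally show ?case using insert by simp
qed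

lemma dirD_half_combination:
  fixes f g :: "'a::real_normed_vector \<Rightarrow> complex"
  assumes "f differentiable at q" "g differentiable at q"
  shows "dirD (\<lambda>y. (f y - c * g y) / 2) q w = (dirD f q w - c * dirD g q w) / 2"
proof -
  have e: "(\<lambda>y. (f y - c * g y) / 2) = (\<lambda>y. (1/2) * f y + (- c / 2) * g y)"
    by (auto simp: field_simps)
  have d: "(\<lambda>y. (1/2) * f y) differentiable at q" "(\<lambda>y. (- c / 2) * g y) differentiable at q"
    using assms by (auto intro!: derivative_intros)
  have "dirD (\<lambda>y. (1/2) * f y + (- c / 2) * g y) q w = (1/2) * dirD f q w + (- c / 2) * dirD g q w"
    using dirD_add[OF d, of w] dirD_cmult[OF assms(1), of "1/2" w] dirD_cmult[OF assms(2), of "-c/2" w] by simp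
  then show ?thesis unfolding e by (simp add: field_simps)
qed

lemma differentiable_transform_open:
  assumes "open S" "q \<in> S" "\<And>x. x \<in> S \<Longrightarrow> f x = g x" "f differentiable at q"
  shows "g differentiable at q"
  using assms has_derivative_transform_within_open unfolding differentiable_def by metis

lemma differentiable_prod:
  fixes f :: "'i \<Rightarrow> 'a::real_normed_vector \<Rightarrow> 'b::real_normed_field"
  assumes "\<And>i. i \<in> I \<Longrightarrow> f i differentiable at x"
  shows "(\<lambda>y. \<Prod>i\<in>I. f i y) differentiable at x"
proof -
  obtain f' where "\<And>i. i \<in> I \<Longrightarrow> (f i has_derivative f' i) (at x)"
    using assms unfolding differentiable_def by metis
  from has_derivative_prod[OF this] show ?thesis by (rule differentiableI)
qed

lemma differentiable_det:
  fixes M :: "'a::real_normed_vector \<Rightarrow> 'b::real_normed_field^'n::finite^'n"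
  assumes "\<And>i c. (\<lambda>q. M q $ i $ c) differentiable at x"
  shows "(\<lambda>q. det (M q)) differentiable at x"
proof -
  have p: "(\<lambda>y. \<Prod>i\<in>UNIV. M y $ i $ p i) differentiable at x" for p :: "'n \<Rightarrow> 'n"
    using differentiable_prod[of UNIV "\<lambda>i y. M y $ i $ p i" x] assms by simp
  show ?thesis unfolding det_def
    by (intro differentiable_sum differentiable_mult p differentiable_const) (auto intro: finite_permutations p)
qed

section \<open>Smooth functions and symmetry of second derivatives\<close>

lemma iter_dirD_append: "iter_dirD (iter_dirD f ws) vs = iter_dirD f (vs @ ws)"
  by (induction vs) auto

lemma smooth_on_dirD:
  assumes "smooth_on S f" shows "smooth_on S (\<lambda>q. dirD f q v)"
proof -
  have "(\<lambda>q. dirD f q v) = iter_dirD f [v]" by simp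
  then show ?thesis using assms unfolding smooth_on_def
    by (metis iter_dirD_append)
qed

lemma smooth_on_imp_differentiable:
  assumes "open S" "smooth_on S f" "q \<in> S" shows "f differentiable at q"
proof -
  have "iter_dirD f [] differentiable_on S" using assms unfolding smooth_on_def by blast
  then show ?thesis using assms differentiable_on_eq_differentiable_at by auto
qed

lemma smooth_on_lincomb:
  fixes f g :: "'a::real_normed_vector \<Rightarrow> complex"
  assumes S: "open S" and f: "smooth_on S f" and g: "smooth_on S g"
  shows "smooth_on S (\<lambda>x. c * f x + d * g x)"
proof -
  have eq: "\<forall>q\<in>S. iter_dirD (\<lambda>x. c * f x + d * g x) vs q = c * iter_dirD f vs q + d * iter_dirD g vs q" for vs
  proof (induction vs)
    case Nil then show ?case by simp
  next
    case (Cons v vs)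
    show ?case
    proof
      fix q assume q: "q \<in> S"
      have df: "iter_dirD f vs differentiable at q" "iter_dirD g vs differentiable at q"
        using f g S q unfolding smooth_on_def by (auto simp: differentiable_on_eq_differentiable_at)
      have "iter_dirD (\<lambda>x. c * f x + d * g x) (v # vs) q
         = dirD (\<lambda>x. c * iter_dirD f vs x + d * iter_dirD g vs x) q v"
        using dirD_cong[OF S q, of "iter_dirD (\<lambda>x. c * f x + d * g x) vs"] Cons by simp
      also have "\<dots> = c * dirD (iter_dirD f vs) q v + d * dirD (iter_dirD g vs) q v"
        using df by (simp add: dirD_add dirD_cmult)
      finally show "iter_dirD (\<lambda>x. c * f x + d * g x) (v # vs) q
        = c * iter_dirD f (v # vs) q + d * iter_dirD g (v # vs) q" by simp
    qed
  qed
  show ?thesis unfolding smooth_on_def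
  proof
    fix vs
    have "\<forall>q\<in>S. (\<lambda>x. c * iter_dirD f vs x + d * iter_dirD g vs x) differentiable at q"
      using f g S unfolding smooth_on_def by (auto simp: differentiable_on_eq_differentiable_at)
    then show "iter_dirD (\<lambda>x. c * f x + d * g x) vs differentiable_on S"
      using eq[of vs] S differentiable_transform_open[OF S, where g="iter_dirD (\<lambda>x. c * f x + d * g x) vs"]
      by (auto simp: differentiable_on_eq_differentiable_at)
  qed
qed

lemma has_real_derivative_Re_mult:
  fixes F :: "real \<Rightarrow> complex"
  assumes "(F has_vector_derivative D) (at x)"
  shows "((\<lambda>s. Re (u * F s)) has_real_derivative Re (u * D)) (at x)"
  using bounded_linear.has_vector_derivative[OF
      bounded_linear_compose[OF bounded_linear_Re bounded_linear_mult_right] assms]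
  by (simp add: has_real_derivative_iff_has_vector_derivative)

lemma mvt_Re_mult:
  fixes F :: "real \<Rightarrow> complex"
  assumes h: "0 < h" and F: "\<And>t. 0 \<le> t \<Longrightarrow> t \<le> h \<Longrightarrow> (F has_vector_derivative F' t) (at t)"
  obtains \<xi> where "0 < \<xi>" "\<xi> < h" "Re (u * (F h - F 0)) = h * Re (u * F' \<xi>)"
proof -
  have "\<exists>\<xi>. 0 < \<xi> \<and> \<xi> < h \<and> Re (u * F h) - Re (u * F 0) = (h - 0) * Re (u * F' \<xi>)"
    by (rule MVT2[OF h]) (rule has_real_derivative_Re_mult[OF F])
  then show ?thesis using that by (auto simp: algebra_simps)
qed

lemma second_difference_mvt:
  fixes f :: "'a::real_normed_vector \<Rightarrow> complex"
  assumes h: "0 < h"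
    and inS: "\<And>s t. 0 \<le> s \<Longrightarrow> s \<le> h \<Longrightarrow> 0 \<le> t \<Longrightarrow> t \<le> h \<Longrightarrow> p + s *\<^sub>R v + t *\<^sub>R w \<in> S"
    and df: "\<And>x. x \<in> S \<Longrightarrow> f differentiable at x"
    and dv: "\<And>x. x \<in> S \<Longrightarrow> (\<lambda>y. dirD f y v) differentiable at x"
  shows "\<exists>s t. 0 < s \<and> s < h \<and> 0 < t \<and> t < h \<and>
     Re (u * (f (p + h *\<^sub>R v + h *\<^sub>R w) - f (p + h *\<^sub>R v) - f (p + h *\<^sub>R w) + f p))
       = h * h * Re (u * dirD (\<lambda>y. dirD f y v) (p + s *\<^sub>R v + t *\<^sub>R w) w)"
proof -
  define g where "g = (\<lambda>y. dirD f y v)"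
  have "((\<lambda>s. f ((p + h *\<^sub>R w) + s *\<^sub>R v) - f (p + s *\<^sub>R v)) has_vector_derivative
      g ((p + h *\<^sub>R w) + s *\<^sub>R v) - g (p + s *\<^sub>R v)) (at s)" if "0 \<le> s" "s \<le> h" for s
    using inS[of s h] inS[of s 0] that h unfolding g_def
    by (intro has_vector_derivative_diff has_vector_derivative_dirD df) (auto simp: algebra_simps)
  then obtain \<xi> where \<xi>: "0 < \<xi>" "\<xi> < h" and e1:
    "Re (u * ((f ((p + h *\<^sub>R w) + h *\<^sub>R v) - f (p + h *\<^sub>R v)) - (f (p + h *\<^sub>R w) - f p)))
      = h * Re (u * (g ((p + \<xi> *\<^sub>R v) + h *\<^sub>R w) - g ((p + \<xi> *\<^sub>R v) + 0 *\<^sub>R w)))"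
    by (rule mvt_Re_mult[OF h, where u = u]) (simp_all add: algebra_simps)
  have "((\<lambda>t. g ((p + \<xi> *\<^sub>R v) + t *\<^sub>R w)) has_vector_derivative
      dirD g ((p + \<xi> *\<^sub>R v) + t *\<^sub>R w) w) (at t)" if "0 \<le> t" "t \<le> h" for t
    using inS[of \<xi> t] that \<xi> unfolding g_def by (intro has_vector_derivative_dirD dv) simp
  then obtain \<eta> where \<eta>: "0 < \<eta>" "\<eta> < h" and e2:
    "Re (u * (g ((p + \<xi> *\<^sub>R v) + h *\<^sub>R w) - g ((p + \<xi> *\<^sub>R v) + 0 *\<^sub>R w)))
      = h * Re (u * dirD g ((p + \<xi> *\<^sub>R v) + \<eta> *\<^sub>R w) w)"
    by (rule mvt_Re_mult[OF h, where u = u])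
  have "Re (u * (f (p + h *\<^sub>R v + h *\<^sub>R w) - f (p + h *\<^sub>R v) - f (p + h *\<^sub>R w) + f p))
      = h * Re (u * (g ((p + \<xi> *\<^sub>R v) + h *\<^sub>R w) - g ((p + \<xi> *\<^sub>R v) + 0 *\<^sub>R w)))"
    using e1 by (simp add: algebra_simps)
  also have "\<dots> = h * h * Re (u * dirD g ((p + \<xi> *\<^sub>R v) + \<eta> *\<^sub>R w) w)"
    using e2 by simp
  finally show ?thesis using \<xi> \<eta> unfolding g_def by blast
qed

lemma parallelogram_near:
  fixes p v w :: "'a::real_normed_vector"
  assumes m: "0 < m"
  obtains h where "0 < h"
    "\<And>s t. 0 \<le> s \<Longrightarrow> s \<le> h \<Longrightarrow> 0 \<le> t \<Longrightarrow> t \<le> h \<Longrightarrow> dist (p + s *\<^sub>R v + t *\<^sub>R w) p < m"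
proof
  define h where "h = m / (2 * (norm v + norm w + 1))"
  have pos: "norm v + norm w + 1 > 0" by (simp add: add_nonneg_pos)
  show h: "h > 0" using m unfolding h_def by (simp add: add_nonneg_pos)
  have hb: "h * (norm v + norm w) < m"
  proof -
    have "h * (norm v + norm w) \<le> h * (norm v + norm w + 1)" using h by simp
    also have "\<dots> = m / 2" using pos unfolding h_def by (simp add: field_simps)
    finally show ?thesis using m by simp
  qed
  fix s t :: real assume st: "0 \<le> s" "s \<le> h" "0 \<le> t" "t \<le> h"
  have "dist (p + s *\<^sub>R v + t *\<^sub>R w) p = norm (s *\<^sub>R v + t *\<^sub>R w)" by (simp add: dist_norm)
  also have "\<dots> \<le> s * norm v + t * norm w"
    using st by (metis (no_types) abs_of_nonneg norm_scaleR norm_triangle_ineq)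
  also have "\<dots> \<le> h * norm v + h * norm w"
    using st by (intro add_mono mult_right_mono) auto
  finally show "dist (p + s *\<^sub>R v + t *\<^sub>R w) p < m" using hb by (simp add: algebra_simps)
qed

text \<open>Schwarz's theorem for directional derivatives.  It is proved for each real projection
  Re (u * _) separately, since the mean value theorem only holds for real-valued functions.\<close>
lemma dirD_commute_Re:
  fixes f :: "'a::real_normed_vector \<Rightarrow> complex"
  assumes S: "open S" "p \<in> S"
    and df: "\<And>x. x \<in> S \<Longrightarrow> f differentiable at x"
    and dv: "\<And>x. x \<in> S \<Longrightarrow> (\<lambda>y. dirD f y v) differentiable at x"
    and dw: "\<And>x. x \<in> S \<Longrightarrow> (\<lambda>y. dirD f y w) differentiable at x"
    and cvw: "continuous_on S (\<lambda>y. dirD (\<lambda>y. dirD f y v) y w)"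
    and cwv: "continuous_on S (\<lambda>y. dirD (\<lambda>y. dirD f y w) y v)"
  shows "Re (u * dirD (\<lambda>y. dirD f y v) p w) = Re (u * dirD (\<lambda>y. dirD f y w) p v)"
proof (rule ccontr)
  define G1 where "G1 = (\<lambda>y. Re (u * dirD (\<lambda>y. dirD f y v) y w))"
  define G2 where "G2 = (\<lambda>y. Re (u * dirD (\<lambda>y. dirD f y w) y v))"
  assume "\<not> ?thesis"
  then have "G1 p \<noteq> G2 p" unfolding G1_def G2_def by simp
  define e where "e = \<bar>G1 p - G2 p\<bar> / 2"
  have e: "e > 0" using \<open>G1 p \<noteq> G2 p\<close> unfolding e_def by simp
  have "continuous_on S G1" "continuous_on S G2" unfolding G1_def G2_def
    by (intro continuous_intros cvw cwv)+
  then obtain d1 d2 where d1: "d1 > 0" "\<And>y. dist y p < d1 \<Longrightarrow> dist (G1 y) (G1 p) < e"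
    and d2: "d2 > 0" "\<And>y. dist y p < d2 \<Longrightarrow> dist (G2 y) (G2 p) < e"
    using S e by (metis continuous_on_eq_continuous_at continuous_at_eps_delta dist_commute)
  obtain r where r: "r > 0" "ball p r \<subseteq> S" using S open_contains_ball by blast
  obtain h where h: "h > 0" and close: "\<And>s t. 0 \<le> s \<Longrightarrow> s \<le> h \<Longrightarrow> 0 \<le> t \<Longrightarrow> t \<le> h
      \<Longrightarrow> dist (p + s *\<^sub>R v + t *\<^sub>R w) p < min r (min d1 d2)"
    using parallelogram_near[of "min r (min d1 d2)" p v w] r d1 d2 by (metis min_less_iff_conj)
  have inS: "p + s *\<^sub>R v + t *\<^sub>R w \<in> S" "p + t *\<^sub>R w + s *\<^sub>R v \<in> S"
    if "0 \<le> s" "s \<le> h" "0 \<le> t" "t \<le> h" for s t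
    using close[OF that] r by (auto simp: dist_commute algebra_simps)
  obtain s1 t1 where st1: "0 < s1" "s1 < h" "0 < t1" "t1 < h" and E1:
     "Re (u * (f (p + h *\<^sub>R v + h *\<^sub>R w) - f (p + h *\<^sub>R v) - f (p + h *\<^sub>R w) + f p))
       = h * h * G1 (p + s1 *\<^sub>R v + t1 *\<^sub>R w)"
    using second_difference_mvt[OF h inS(1) df dv, of u] unfolding G1_def by blast
  obtain s2 t2 where st2: "0 < s2" "s2 < h" "0 < t2" "t2 < h" and E2:
     "Re (u * (f (p + h *\<^sub>R w + h *\<^sub>R v) - f (p + h *\<^sub>R w) - f (p + h *\<^sub>R v) + f p))
       = h * h * G2 (p + s2 *\<^sub>R w + t2 *\<^sub>R v)"
    using second_difference_mvt[OF h inS(2) df dw, of u] unfolding G2_def by blast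
  have eq: "G1 (p + s1 *\<^sub>R v + t1 *\<^sub>R w) = G2 (p + s2 *\<^sub>R w + t2 *\<^sub>R v)"
    using E1 E2 h by (simp add: algebra_simps)
  have "dist (p + s1 *\<^sub>R v + t1 *\<^sub>R w) p < d1" "dist (p + s2 *\<^sub>R w + t2 *\<^sub>R v) p < d2"
    using close[of s1 t1] close[of t2 s2] st1 st2 by (auto simp: algebra_simps)
  then have "\<bar>G1 (p + s1 *\<^sub>R v + t1 *\<^sub>R w) - G1 p\<bar> < e" "\<bar>G2 (p + s2 *\<^sub>R w + t2 *\<^sub>R v) - G2 p\<bar> < e"
    using d1 d2 by (auto simp: dist_real_def)
  then show False using eq unfolding e_def by (auto simp: abs_if split: if_splits)
qed

lemma dirD_commute:
  fixes f :: "'a::real_normed_vector \<Rightarrow> complex"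
  assumes S: "open S" "p \<in> S"
    and df: "\<And>x. x \<in> S \<Longrightarrow> f differentiable at x"
    and dv: "\<And>x. x \<in> S \<Longrightarrow> (\<lambda>y. dirD f y v) differentiable at x"
    and dw: "\<And>x. x \<in> S \<Longrightarrow> (\<lambda>y. dirD f y w) differentiable at x"
    and cvw: "continuous_on S (\<lambda>y. dirD (\<lambda>y. dirD f y v) y w)"
    and cwv: "continuous_on S (\<lambda>y. dirD (\<lambda>y. dirD f y w) y v)"
  shows "dirD (\<lambda>y. dirD f y v) p w = dirD (\<lambda>y. dirD f y w) p v"
proof -
  have r: "Re (u * dirD (\<lambda>y. dirD f y v) p w) = Re (u * dirD (\<lambda>y. dirD f y w) p v)" for u
    using dirD_commute_Re[OF assms] .
  show ?thesis using r[of 1] r[of "-\<i>"] by (simp add: complex_eq_iff)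
qed

lemma smooth_on_dirD_commute:
  fixes f :: "'a::real_normed_vector \<Rightarrow> complex"
  assumes S: "open S" "p \<in> S" and f: "smooth_on S f"
  shows "dirD (\<lambda>y. dirD f y v) p w = dirD (\<lambda>y. dirD f y w) p v"
proof (rule dirD_commute[OF S])
  show "\<And>x. x \<in> S \<Longrightarrow> f differentiable at x" using smooth_on_imp_differentiable[OF S(1) f] .
  show "\<And>x. x \<in> S \<Longrightarrow> (\<lambda>y. dirD f y v) differentiable at x"
    using smooth_on_imp_differentiable[OF S(1) smooth_on_dirD[OF f]] .
  show "\<And>x. x \<in> S \<Longrightarrow> (\<lambda>y. dirD f y w) differentiable at x"
    using smooth_on_imp_differentiable[OF S(1) smooth_on_dirD[OF f]] .
  show "continuous_on S (\<lambda>y. dirD (\<lambda>y. dirD f y v) y w)"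
    using smooth_on_imp_differentiable[OF S(1) smooth_on_dirD[OF smooth_on_dirD[OF f]]]
    by (meson S(1) continuous_at_imp_continuous_on differentiable_imp_continuous_within)
  show "continuous_on S (\<lambda>y. dirD (\<lambda>y. dirD f y w) y v)"
    using smooth_on_imp_differentiable[OF S(1) smooth_on_dirD[OF smooth_on_dirD[OF f]]]
    by (meson S(1) continuous_at_imp_continuous_on differentiable_imp_continuous_within)
qed

section \<open>Wirtinger derivatives\<close>

definition wzbar :: "'n::finite \<Rightarrow> ('n cpt \<Rightarrow> complex) \<Rightarrow> 'n cpt \<Rightarrow> complex" where
  "wzbar k f p = (dirD f p (axis k 1, 0) + \<i> * dirD f p (axis k \<i>, 0)) / 2"

lemmas wirtinger_defs = wz_def wzbar_def wzeta_def wzetabar_def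

lemma smooth_on_wzeta:
  assumes "open S" "smooth_on S f" shows "smooth_on S (wzeta k f)"
proof -
  have "smooth_on S (\<lambda>q. (1/2) * dirD f q (0, axis k 1) + (-\<i>/2) * dirD f q (0, axis k \<i>))"
    using assms by (intro smooth_on_lincomb smooth_on_dirD)
  then show ?thesis unfolding wzeta_def by (simp add: diff_divide_distrib mult.commute)
qed

lemma smooth_on_wzetabar:
  assumes "open S" "smooth_on S f" shows "smooth_on S (wzetabar k f)"
proof -
  have "smooth_on S (\<lambda>q. (1/2) * dirD f q (0, axis k 1) + (\<i>/2) * dirD f q (0, axis k \<i>))"
    using assms by (intro smooth_on_lincomb smooth_on_dirD)
  then show ?thesis unfolding wzetabar_def by (simp add: add_divide_distrib mult.commute)
qed

lemma wirtinger_combination: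
  fixes A B a :: complex
  shows "(A - \<i> * B) / 2 * a + (A + \<i> * B) / 2 * cnj a = Re a *\<^sub>R A + Im a *\<^sub>R B"
proof -
  obtain x y where a: "a = Complex x y" by (cases a)
  have "a = of_real x + \<i> * of_real y" using a by (simp add: Complex_eq)
  moreover have "cnj a = of_real x - \<i> * of_real y" using a by (simp add: Complex_eq)
  ultimately show ?thesis using a
    by (simp add: scaleR_conv_of_real field_simps)
qed

lemma vec_eq_sum_axis_Re_Im:
  fixes a :: "complex^'n::finite"
  shows "a = (\<Sum>k\<in>UNIV. Re (a$k) *\<^sub>R axis k 1 + Im (a$k) *\<^sub>R axis k \<i>)"
proof (subst vec_eq_iff, intro allI)
  fix j
  have "(\<Sum>k\<in>UNIV. Re (a$k) *\<^sub>R axis k 1 + Im (a$k) *\<^sub>R axis k \<i>) $ j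
       = (\<Sum>k\<in>UNIV. (if k = j then Re (a$j) *\<^sub>R 1 + Im (a$j) *\<^sub>R \<i> else 0))"
    unfolding sum_component by (intro sum.cong refl) (auto simp: axis_def)
  also have "\<dots> = Re (a$j) *\<^sub>R 1 + Im (a$j) *\<^sub>R \<i>" by simp
  also have "\<dots> = a$j" by (simp add: scaleR_conv_of_real complex_eq[symmetric] mult.commute)
  finally show "a $ j = (\<Sum>k\<in>UNIV. Re (a$k) *\<^sub>R axis k 1 + Im (a$k) *\<^sub>R axis k \<i>) $ j" by simp
qed

lemma linear_wirtinger_expansion:
  fixes F :: "complex^'n::finite \<Rightarrow> complex"
  assumes "linear F"
  shows "F a = (\<Sum>k\<in>UNIV. (F (axis k 1) - \<i> * F (axis k \<i>)) / 2 * a$k + (F (axis k 1) + \<i> * F (axis k \<i>)) / 2 * cnj (a$k))"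
proof -
  have "F a = F (\<Sum>k\<in>UNIV. Re (a$k) *\<^sub>R axis k 1 + Im (a$k) *\<^sub>R axis k \<i>)"
    using vec_eq_sum_axis_Re_Im[of a] by simp
  also have "\<dots> = (\<Sum>k\<in>UNIV. Re (a$k) *\<^sub>R F (axis k 1) + Im (a$k) *\<^sub>R F (axis k \<i>))"
    using assms by (simp add: linear_sum linear_add linear_scale)
  also have "\<dots> = (\<Sum>k\<in>UNIV. (F (axis k 1) - \<i> * F (axis k \<i>)) / 2 * a$k + (F (axis k 1) + \<i> * F (axis k \<i>)) / 2 * cnj (a$k))"
    by (intro sum.cong refl) (metis wirtinger_combination)
  finally show ?thesis .
qed

lemma dirD_wirtinger:
  fixes f :: "'n::finite cpt \<Rightarrow> complex"
  assumes "f differentiable at q"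
  shows "dirD f q (a, b) = (\<Sum>k\<in>UNIV. wz k f q * a$k + wzbar k f q * cnj (a$k)
          + wzeta k f q * b$k + wzetabar k f q * cnj (b$k))"
proof -
  obtain F where F: "(f has_derivative F) (at q)" using assms differentiable_def by blast
  have lin: "linear F" using F has_derivative_linear by blast
  have l1: "linear (\<lambda>x. F (x, 0))" and l2: "linear (\<lambda>x. F (0, x))"
    using lin by (auto simp: linear_iff linear_add[OF lin, symmetric] linear_scale[OF lin, symmetric])
  have "F (a, b) = F (a, 0) + F (0, b)" using linear_add[OF lin, of "(a,0)" "(0,b)"] by simp
  also have "F (a, 0) = (\<Sum>k\<in>UNIV. wz k f q * a$k + wzbar k f q * cnj (a$k))"
    using linear_wirtinger_expansion[OF l1, of a] F by (simp add: wz_def wzbar_def dirD_eq_derivative)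
  also have "F (0, b) = (\<Sum>k\<in>UNIV. wzeta k f q * b$k + wzetabar k f q * cnj (b$k))"
    using linear_wirtinger_expansion[OF l2, of b] F by (simp add: wzeta_def wzetabar_def dirD_eq_derivative)
  finally show ?thesis using F by (simp add: dirD_eq_derivative sum.distrib add.assoc)
qed

lemma wz_cong: "open S \<Longrightarrow> q \<in> S \<Longrightarrow> (\<And>x. x \<in> S \<Longrightarrow> f x = g x) \<Longrightarrow> wz k f q = wz k g q"
  unfolding wz_def using dirD_cong[of S q f g] by simp

lemma wzbar_cong: "open S \<Longrightarrow> q \<in> S \<Longrightarrow> (\<And>x. x \<in> S \<Longrightarrow> f x = g x) \<Longrightarrow> wzbar k f q = wzbar k g q"
  unfolding wzbar_def using dirD_cong[of S q f g] by simp

lemma wzeta_cong: "open S \<Longrightarrow> q \<in> S \<Longrightarrow> (\<And>x. x \<in> S \<Longrightarrow> f x = g x) \<Longrightarrow> wzeta k f q = wzeta k g q"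
  unfolding wzeta_def using dirD_cong[of S q f g] by simp

lemma wzetabar_cong: "open S \<Longrightarrow> q \<in> S \<Longrightarrow> (\<And>x. x \<in> S \<Longrightarrow> f x = g x) \<Longrightarrow> wzetabar k f q = wzetabar k g q"
  unfolding wzetabar_def using dirD_cong[of S q f g] by simp

lemma wirtinger_mult:
  fixes f g :: "'n::finite cpt \<Rightarrow> complex"
  assumes "f differentiable at q" "g differentiable at q"
  shows "wz k (\<lambda>x. f x * g x) q = wz k f q * g q + f q * wz k g q"
    "wzbar k (\<lambda>x. f x * g x) q = wzbar k f q * g q + f q * wzbar k g q"
    "wzeta k (\<lambda>x. f x * g x) q = wzeta k f q * g q + f q * wzeta k g q"
    "wzetabar k (\<lambda>x. f x * g x) q = wzetabar k f q * g q + f q * wzetabar k g q"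
  using assms by (simp_all add: wirtinger_defs dirD_mult algebra_simps add_divide_distrib diff_divide_distrib)

lemma wirtinger_sum:
  fixes f :: "'i \<Rightarrow> 'n::finite cpt \<Rightarrow> complex"
  assumes "finite I" "\<And>i. i \<in> I \<Longrightarrow> f i differentiable at q"
  shows "wz k (\<lambda>x. \<Sum>i\<in>I. f i x) q = (\<Sum>i\<in>I. wz k (f i) q)"
    "wzbar k (\<lambda>x. \<Sum>i\<in>I. f i x) q = (\<Sum>i\<in>I. wzbar k (f i) q)"
    "wzeta k (\<lambda>x. \<Sum>i\<in>I. f i x) q = (\<Sum>i\<in>I. wzeta k (f i) q)"
    "wzetabar k (\<lambda>x. \<Sum>i\<in>I. f i x) q = (\<Sum>i\<in>I. wzetabar k (f i) q)"
  using assms by (simp_all add: wirtinger_defs dirD_sum sum_subtractf sum.distrib sum_distrib_left flip: sum_divide_distrib)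

lemma wirtinger_cnj:
  fixes f :: "'n::finite cpt \<Rightarrow> complex"
  assumes "f differentiable at q"
  shows "wz k (\<lambda>x. cnj (f x)) q = cnj (wzbar k f q)"
    "wzbar k (\<lambda>x. cnj (f x)) q = cnj (wz k f q)"
    "wzeta k (\<lambda>x. cnj (f x)) q = cnj (wzetabar k f q)"
    "wzetabar k (\<lambda>x. cnj (f x)) q = cnj (wzeta k f q)"
  using assms by (simp_all add: wirtinger_defs dirD_cnj)

lemma has_derivative_fibre_coord: "((\<lambda>q::'n::finite cpt. snd q $ l) has_derivative (\<lambda>v. snd v $ l)) (at q)"
  by (intro bounded_linear_imp_has_derivative
      bounded_linear_compose[OF bounded_linear_vec_nth bounded_linear_snd])

lemma has_derivative_cnj_fibre_coord: "((\<lambda>q::'n::finite cpt. cnj (snd q $ l)) has_derivative (\<lambda>v. cnj (snd v $ l))) (at q)"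
  using has_derivative_cnj[OF has_derivative_fibre_coord] .

lemma differentiable_fibre_coord: "(\<lambda>q::'n::finite cpt. snd q $ l) differentiable at q"
  using has_derivative_fibre_coord differentiable_def by blast

lemma differentiable_cnj_fibre_coord: "(\<lambda>q::'n::finite cpt. cnj (snd q $ l)) differentiable at q"
  using has_derivative_cnj_fibre_coord differentiable_def by blast

lemma wirtinger_fibre_coord:
  "wz k (\<lambda>q::'n::finite cpt. snd q $ l) q = 0"
  "wzbar k (\<lambda>q::'n::finite cpt. snd q $ l) q = 0"
  "wzeta k (\<lambda>q::'n::finite cpt. snd q $ l) q = (if k = l then 1 else 0)"
  "wzetabar k (\<lambda>q::'n::finite cpt. snd q $ l) q = 0"
  "wz k (\<lambda>q::'n::finite cpt. cnj (snd q $ l)) q = 0"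
  "wzbar k (\<lambda>q::'n::finite cpt. cnj (snd q $ l)) q = 0"
  "wzeta k (\<lambda>q::'n::finite cpt. cnj (snd q $ l)) q = 0"
  "wzetabar k (\<lambda>q::'n::finite cpt. cnj (snd q $ l)) q = (if k = l then 1 else 0)"
  by (simp_all add: wirtinger_defs dirD_eq_derivative[OF has_derivative_fibre_coord] dirD_eq_derivative[OF has_derivative_cnj_fibre_coord] axis_def)

lemma sum_mult_axis_cnj:
  fixes f g :: "'n::finite \<Rightarrow> complex"
  shows "(\<Sum>l\<in>UNIV. f l * axis k v $ l + g l * cnj (axis k v $ l)) = f k * v + g k * cnj v"
proof -
  have "(\<Sum>l\<in>UNIV. f l * axis k v $ l + g l * cnj (axis k v $ l))
      = (\<Sum>l\<in>UNIV. if l = k then f k * v + g k * cnj v else 0)"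
    by (intro sum.cong) (auto simp: axis_def)
  then show ?thesis by simp
qed

lemma dirD_fibre_axis:
  fixes f :: "'n::finite cpt \<Rightarrow> complex"
  assumes "f differentiable at q"
  shows "dirD f q (0, axis k v) = wzeta k f q * v + wzetabar k f q * cnj v"
  using dirD_wirtinger[OF assms, of 0 "axis k v"] sum_mult_axis_cnj[of "\<lambda>l. wzeta l f q" k v "\<lambda>l. wzetabar l f q"]
  by simp

lemma has_vector_derivative_componentwise:
  fixes z :: "real \<Rightarrow> complex^'n::finite"
  assumes "\<And>k. ((\<lambda>t. z t $ k) has_vector_derivative d k) (at s)"
  shows "(z has_vector_derivative (\<chi> k. d k)) (at s)"
  unfolding has_vector_derivative_def
proof (subst has_derivative_componentwise_within, intro ballI)
  fix i :: "complex^'n" assume "i \<in> Basis"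
  then obtain j u where iu: "i = axis j u" "u \<in> Basis" by (auto simp: Basis_vec_def)
  have "((\<lambda>t. z t $ j) has_derivative (\<lambda>h. h *\<^sub>R d j)) (at s)"
    using assms has_vector_derivative_def by blast
  from bounded_linear.has_derivative[OF bounded_linear_inner_left this]
  have "((\<lambda>t. (z t $ j) \<bullet> u) has_derivative (\<lambda>h. (h *\<^sub>R d j) \<bullet> u)) (at s)" .
  then show "((\<lambda>x. z x \<bullet> i) has_derivative (\<lambda>x. (x *\<^sub>R (\<chi> k. d k)) \<bullet> i)) (at s within UNIV)"
    using iu by (simp add: inner_axis)
qed

lemma has_vector_derivative_wirtinger_chain:
  fixes f :: "'n::finite cpt \<Rightarrow> complex" and z \<zeta> :: "real \<Rightarrow> complex^'n"
  assumes zd: "\<And>k. (\<lambda>t. z t $ k) differentiable at s"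
    and wd: "\<And>k. (\<lambda>t. \<zeta> t $ k) differentiable at s"
    and fd: "f differentiable at (z s, \<zeta> s)"
  shows "((\<lambda>t. f (z t, \<zeta> t)) has_vector_derivative
     (\<Sum>k\<in>UNIV. wz k f (z s, \<zeta> s) * vector_derivative (\<lambda>t. z t $ k) (at s)
        + wzbar k f (z s, \<zeta> s) * cnj (vector_derivative (\<lambda>t. z t $ k) (at s))
        + wzeta k f (z s, \<zeta> s) * vector_derivative (\<lambda>t. \<zeta> t $ k) (at s)
        + wzetabar k f (z s, \<zeta> s) * cnj (vector_derivative (\<lambda>t. \<zeta> t $ k) (at s)))) (at s)"
proof -
  define dz where "dz = (\<chi> k. vector_derivative (\<lambda>t. z t $ k) (at s))"
  define dw where "dw = (\<chi> k. vector_derivative (\<lambda>t. \<zeta> t $ k) (at s))"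
  have "(z has_vector_derivative dz) (at s)" unfolding dz_def
    by (rule has_vector_derivative_componentwise) (use zd vector_derivative_works in blast)
  moreover have "(\<zeta> has_vector_derivative dw) (at s)" unfolding dw_def
    by (rule has_vector_derivative_componentwise) (use wd vector_derivative_works in blast)
  ultimately have "((\<lambda>t. (z t, \<zeta> t)) has_vector_derivative (dz, dw)) (at s)"
    by (rule has_vector_derivative_Pair)
  then have g: "((\<lambda>t. (z t, \<zeta> t)) has_derivative (\<lambda>h. h *\<^sub>R (dz, dw))) (at s)"
    by (simp add: has_vector_derivative_def)
  obtain F where F: "(f has_derivative F) (at (z s, \<zeta> s))" using fd differentiable_def by blast
  have "((\<lambda>t. f (z t, \<zeta> t)) has_derivative (\<lambda>h. F (h *\<^sub>R (dz, dw)))) (at s)"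
    using has_derivative_compose[OF g F] by simp
  moreover have "(\<lambda>h. F (h *\<^sub>R (dz, dw))) = (\<lambda>h. h *\<^sub>R F (dz, dw))"
    using F has_derivative_linear linear_scale by blast
  ultimately have "((\<lambda>t. f (z t, \<zeta> t)) has_vector_derivative F (dz, dw)) (at s)"
    by (simp add: has_vector_derivative_def)
  moreover have "F (dz, dw) = dirD f (z s, \<zeta> s) (dz, dw)" using dirD_eq_derivative[OF F] by simp
  ultimately show ?thesis using dirD_wirtinger[OF fd, of dz dw] by (simp add: dz_def dw_def)
qed

lemma sum_kronecker [simp]:
  fixes f :: "'n::finite \<Rightarrow> 'a::comm_semiring_1"
  shows "(\<Sum>m\<in>UNIV. (if c = m then 1 else 0) * f m) = f c"
    "(\<Sum>m\<in>UNIV. (if m = c then 1 else 0) * f m) = f c"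
    "(\<Sum>m\<in>UNIV. f m * (if c = m then 1 else 0)) = f c"
    "(\<Sum>m\<in>UNIV. f m * (if m = c then 1 else 0)) = f c"
  by (simp_all add: if_distrib[of "\<lambda>x. x * _"] if_distrib[of "\<lambda>x. _ * x"] cong: if_cong)

lemma sesquilinear_axis:
  fixes P :: "'n::finite \<Rightarrow> 'n \<Rightarrow> complex"
  shows "(\<Sum>i\<in>UNIV. \<Sum>j\<in>UNIV. P j i * axis a x $ i * cnj (axis c w $ j)) = P c a * x * cnj w"
proof -
  have "(\<Sum>j\<in>UNIV. P j i * axis a x $ i * cnj (axis c w $ j)) = (\<Sum>j\<in>UNIV. if j = c then P c i * axis a x $ i * cnj w else 0)" for i
    by (intro sum.cong) (auto simp: axis_def)
  then have "(\<Sum>i\<in>UNIV. \<Sum>j\<in>UNIV. P j i * axis a x $ i * cnj (axis c w $ j)) = (\<Sum>i\<in>UNIV. P c i * axis a x $ i * cnj w)"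
    by simp
  also have "\<dots> = (\<Sum>i\<in>UNIV. if i = a then P c a * x * cnj w else 0)"
    by (intro sum.cong) (auto simp: axis_def)
  finally show ?thesis by simp
qed

lemma sesquilinear_axis_add:
  fixes P :: "'n::finite \<Rightarrow> 'n \<Rightarrow> complex"
  shows "(\<Sum>i\<in>UNIV. \<Sum>j\<in>UNIV. P j i * (axis a x + axis b y) $ i * cnj ((axis a x + axis b y) $ j))
    = P a a * x * cnj x + P a b * y * cnj x + P b a * x * cnj y + P b b * y * cnj y"
  by (simp add: distrib_left distrib_right sum.distrib sesquilinear_axis)

lemma sum_rotate3: "(\<Sum>k\<in>A. \<Sum>a\<in>B. \<Sum>m\<in>C. f k a m) = (\<Sum>a\<in>B. \<Sum>m\<in>C. \<Sum>k\<in>A. f k a m)"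
proof -
  have "(\<Sum>k\<in>A. \<Sum>a\<in>B. \<Sum>m\<in>C. f k a m) = (\<Sum>a\<in>B. \<Sum>k\<in>A. \<Sum>m\<in>C. f k a m)"
    by (rule sum.swap)
  also have "\<dots> = (\<Sum>a\<in>B. \<Sum>m\<in>C. \<Sum>k\<in>A. f k a m)"
    by (intro sum.cong refl sum.swap)
  finally show ?thesis .
qed

lemma sum_rotate4: "(\<Sum>k\<in>A. \<Sum>r\<in>B. \<Sum>a\<in>C. \<Sum>m\<in>D. f k r a m) = (\<Sum>r\<in>B. \<Sum>a\<in>C. \<Sum>m\<in>D. \<Sum>k\<in>A. f k r a m)"
proof -
  have "(\<Sum>k\<in>A. \<Sum>r\<in>B. \<Sum>a\<in>C. \<Sum>m\<in>D. f k r a m) = (\<Sum>r\<in>B. \<Sum>k\<in>A. \<Sum>a\<in>C. \<Sum>m\<in>D. f k r a m)"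
    by (rule sum.swap)
  also have "\<dots> = (\<Sum>r\<in>B. \<Sum>a\<in>C. \<Sum>m\<in>D. \<Sum>k\<in>A. f k r a m)"
    by (intro sum.cong refl sum_rotate3)
  finally show ?thesis .
qed

definition nonzero_cotangent :: "(complex^'n::finite) set \<Rightarrow> 'n cpt set" where
  "nonzero_cotangent U = U \<times> (UNIV - {0})"

lemma nonzero_cotangent_iff: "q \<in> nonzero_cotangent U \<longleftrightarrow> fst q \<in> U \<and> snd q \<noteq> 0"
  unfolding nonzero_cotangent_def by (cases q) auto

lemma open_nonzero_cotangent: "complex_cartan_space U C \<Longrightarrow> open (nonzero_cotangent U)"
  unfolding nonzero_cotangent_def complex_cartan_space_def by (auto intro!: open_Times)

lemma smooth_on_Hf: "complex_cartan_space U C \<Longrightarrow> smooth_on (nonzero_cotangent U) (Hf C)"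
  unfolding nonzero_cotangent_def complex_cartan_space_def by auto

lemma smooth_on_wzetabar_Hf:
  "complex_cartan_space U C \<Longrightarrow> smooth_on (nonzero_cotangent U) (wzetabar k (Hf C))"
  using smooth_on_wzetabar[OF open_nonzero_cotangent smooth_on_Hf] by blast

lemma smooth_on_hupbar: "complex_cartan_space U C \<Longrightarrow> smooth_on (nonzero_cotangent U) (hupbar C j i)"
  unfolding hupbar_def[abs_def]
  using smooth_on_wzeta[OF open_nonzero_cotangent smooth_on_wzetabar_Hf] by blast

lemma differentiable_Hf:
  "complex_cartan_space U C \<Longrightarrow> q \<in> nonzero_cotangent U \<Longrightarrow> Hf C differentiable at q"
  using smooth_on_imp_differentiable[OF open_nonzero_cotangent smooth_on_Hf] by blast

lemma differentiable_wzetabar_Hf: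
  "complex_cartan_space U C \<Longrightarrow> q \<in> nonzero_cotangent U \<Longrightarrow> wzetabar k (Hf C) differentiable at q"
  using smooth_on_imp_differentiable[OF open_nonzero_cotangent smooth_on_wzetabar_Hf] by blast

lemma differentiable_hupbar:
  "complex_cartan_space U C \<Longrightarrow> q \<in> nonzero_cotangent U \<Longrightarrow> hupbar C j i differentiable at q"
  using smooth_on_imp_differentiable[OF open_nonzero_cotangent smooth_on_hupbar] by blast

lemma hupbar_form_positive:
  assumes "complex_cartan_space U C" "q \<in> nonzero_cotangent U" "v \<noteq> 0"
  shows "Im (\<Sum>i\<in>UNIV. \<Sum>j\<in>UNIV. hupbar C j i q * v $ i * cnj (v $ j)) = 0"
    "0 < Re (\<Sum>i\<in>UNIV. \<Sum>j\<in>UNIV. hupbar C j i q * v $ i * cnj (v $ j))"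
proof -
  obtain z w where q: "q = (z, w)" by (cases q)
  then have "z \<in> U" "w \<noteq> 0" using assms(2) by (auto simp: nonzero_cotangent_def)
  then show "Im (\<Sum>i\<in>UNIV. \<Sum>j\<in>UNIV. hupbar C j i q * v $ i * cnj (v $ j)) = 0"
    "0 < Re (\<Sum>i\<in>UNIV. \<Sum>j\<in>UNIV. hupbar C j i q * v $ i * cnj (v $ j))"
    using assms(1,3) unfolding complex_cartan_space_def q Let_def by blast+
qed

lemma hupbar_hermitian:
  fixes q :: "'n::finite cpt"
  assumes cart: "complex_cartan_space U C" and q: "q \<in> nonzero_cotangent U"
  shows "hupbar C a b q = cnj (hupbar C b a q)"
proof -
  let ?P = "\<lambda>j i. hupbar C j i q"
  have nz: "axis a 1 + axis b y \<noteq> (0::complex^'n)" if "y \<noteq> -1" for y :: complex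
  proof
    assume "axis a 1 + axis b y = (0::complex^'n)"
    then have "(axis a 1 + axis b y) $ a = 0" by simp
    then have "1 + (if a = b then y else 0) = 0" by (simp add: axis_def)
    then show False using that by (cases "a = b") (auto simp: add_eq_0_iff)
  qed
  have n1: "axis a (1::complex) \<noteq> 0" "axis b (1::complex) \<noteq> 0" by simp_all
  have i1: "Im (?P a a) = 0" using hupbar_form_positive(1)[OF cart q n1(1), unfolded sesquilinear_axis] by simp
  have i2: "Im (?P b b) = 0" using hupbar_form_positive(1)[OF cart q n1(2), unfolded sesquilinear_axis] by simp
  have i3: "Im (?P a a + ?P a b + ?P b a + ?P b b) = 0"
    using hupbar_form_positive(1)[OF cart q nz[of 1], unfolded sesquilinear_axis_add] by simp
  have i4: "Im (?P a a + ?P a b * \<i> - ?P b a * \<i> + ?P b b) = 0"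
    using hupbar_form_positive(1)[OF cart q nz[of \<i>], unfolded sesquilinear_axis_add] by (simp add: complex_eq_iff)
  show ?thesis using i1 i2 i3 i4 by (simp add: complex_eq_iff)
qed

lemma hmat_invertible:
  assumes cart: "complex_cartan_space U C" and q: "q \<in> nonzero_cotangent U"
  shows "invertible (hmat C q)"
proof -
  have "\<forall>x. hmat C q *v x = 0 \<longrightarrow> x = 0"
  proof (intro allI impI)
    fix x assume x: "hmat C q *v x = 0"
    show "x = 0"
    proof (rule ccontr)
      assume "x \<noteq> 0"
      from hupbar_form_positive(2)[OF cart q this]
      have pos: "0 < Re (\<Sum>i\<in>UNIV. \<Sum>j\<in>UNIV. hupbar C j i q * x $ i * cnj (x $ j))" .
      have "(\<Sum>i\<in>UNIV. \<Sum>j\<in>UNIV. hupbar C j i q * x $ i * cnj (x $ j))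
          = (\<Sum>j\<in>UNIV. cnj (x $ j) * (\<Sum>i\<in>UNIV. hupbar C j i q * x $ i))"
        by (subst sum.swap) (simp add: sum_distrib_left mult_ac)
      also have "\<dots> = (\<Sum>j\<in>UNIV. cnj (x $ j) * (hmat C q *v x) $ j)"
        by (simp add: matrix_vector_mult_def hmat_def)
      also have "\<dots> = 0" using x by simp
      finally show False using pos by simp
    qed
  qed
  then show ?thesis using matrix_left_invertible_ker invertible_left_inverse by blast
qed

lemma matrix_inv_mult:
  fixes A :: "'a::field^'n::finite^'n"
  assumes "invertible A"
  shows "A ** matrix_inv A = mat 1" "matrix_inv A ** A = mat 1"
proof -
  have "\<exists>A'. A ** A' = mat 1 \<and> A' ** A = mat 1" using assms invertible_def by blast
  from someI_ex[OF this] show "A ** matrix_inv A = mat 1" "matrix_inv A ** A = mat 1"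
    unfolding matrix_inv_def by auto
qed

lemma hlow_hupbar:
  assumes cart: "complex_cartan_space U C" and q: "q \<in> nonzero_cotangent U"
  shows "(\<Sum>m\<in>UNIV. hlow C j m q * hupbar C m k q) = (if j = k then 1 else 0)"
proof -
  have "(matrix_inv (hmat C q) ** hmat C q) $ j $ k = mat 1 $ j $ k"
    using matrix_inv_mult(2)[OF hmat_invertible[OF cart q]] by simp
  then show ?thesis by (simp add: matrix_matrix_mult_def mat_def hlow_def hmat_def)
qed

lemma hupbar_hlow:
  assumes cart: "complex_cartan_space U C" and q: "q \<in> nonzero_cotangent U"
  shows "(\<Sum>m\<in>UNIV. hupbar C j m q * hlow C m k q) = (if j = k then 1 else 0)"
proof -
  have "(hmat C q ** matrix_inv (hmat C q)) $ j $ k = mat 1 $ j $ k"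
    using matrix_inv_mult(1)[OF hmat_invertible[OF cart q]] by simp
  then show ?thesis by (simp add: matrix_matrix_mult_def mat_def hlow_def hmat_def)
qed

lemma hmat_nth [simp]: "hmat C q $ i $ c = hupbar C i c q"
  by (simp add: hmat_def)

lemma hlow_Cramer:
  assumes cart: "complex_cartan_space U C" and q: "q \<in> nonzero_cotangent U"
  shows "hlow C j m q = det (\<chi> i c. if c = j then axis m 1 $ i else hupbar C i c q) / det (hmat C q)"
proof -
  let ?A = "hmat C q"
  have inv: "invertible ?A" using hmat_invertible[OF cart q] .
  have d0: "det ?A \<noteq> 0" using inv invertible_det_nz by blast
  define x where "x = matrix_inv ?A *v axis m 1"
  have "?A *v x = axis m 1"
    unfolding x_def by (simp add: matrix_vector_mul_assoc matrix_inv_mult(1)[OF inv])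
  then have x: "x = (\<chi> k. det (\<chi> i c. if c = k then axis m 1 $ i else ?A $ i $ c) / det ?A)"
    using cramer[OF d0] by blast
  have "x $ j = hlow C j m q"
    unfolding x_def hlow_def matrix_vector_mult_def by (simp add: axis_def if_distrib cong: if_cong)
  then show ?thesis using x by (simp cong: if_cong)
qed

lemma differentiable_hlow:
  assumes cart: "complex_cartan_space U C" and q: "q \<in> nonzero_cotangent U"
  shows "hlow C j m differentiable at q"
proof -
  have o: "open (nonzero_cotangent U)" using open_nonzero_cotangent[OF cart] .
  let ?F = "\<lambda>x. det (\<chi> i c. if c = j then axis m 1 $ i else hupbar C i c x) / det (hmat C x)"
  have d1: "(\<lambda>x. det (\<chi> i c. if c = j then axis m 1 $ i else hupbar C i c x)) differentiable at q"
  proof (rule differentiable_det)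
    fix i c show "(\<lambda>x. (\<chi> i c. if c = j then axis m 1 $ i else hupbar C i c x) $ i $ c) differentiable at q"
      by (cases "c = j") (simp_all add: differentiable_hupbar[OF cart q])
  qed
  have d2: "(\<lambda>x. det (hmat C x)) differentiable at q"
    by (rule differentiable_det) (simp add: differentiable_hupbar[OF cart q])
  have "det (hmat C q) \<noteq> 0" using hmat_invertible[OF cart q] invertible_det_nz by blast
  then have "?F differentiable at q" using d1 d2 by (rule differentiable_divide[rotated 2])
  moreover have "\<And>x. x \<in> nonzero_cotangent U \<Longrightarrow> ?F x = hlow C j m x"
    using hlow_Cramer[OF cart] by simp
  ultimately show ?thesis
    using differentiable_transform_open[OF o q, of ?F "hlow C j m"] by blast
qed

lemma hupbar_kernel_trivial:
  assumes cart: "complex_cartan_space U C" and q: "q \<in> nonzero_cotangent U"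
    and h: "\<And>k. (\<Sum>i\<in>UNIV. hupbar C i k q * cnj (e i)) = 0"
  shows "e i = 0"
proof -
  have h2: "(\<Sum>i\<in>UNIV. hupbar C k i q * e i) = 0" for k
  proof -
    have "(\<Sum>i\<in>UNIV. hupbar C k i q * e i) = cnj (\<Sum>i\<in>UNIV. hupbar C i k q * cnj (e i))"
      by (simp add: cnj_sum hupbar_hermitian[OF cart q, of k])
    then show ?thesis using h by simp
  qed
  define v where "v = (\<chi> i. e i)"
  show ?thesis
  proof (rule ccontr)
    assume "e i \<noteq> 0"
    then have "v \<noteq> 0" unfolding v_def by (auto simp: vec_eq_iff)
    from hupbar_form_positive(2)[OF cart q this]
    have pos: "0 < Re (\<Sum>i\<in>UNIV. \<Sum>j\<in>UNIV. hupbar C j i q * v $ i * cnj (v $ j))" .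
    have "(\<Sum>i\<in>UNIV. \<Sum>j\<in>UNIV. hupbar C j i q * v $ i * cnj (v $ j))
        = (\<Sum>j\<in>UNIV. cnj (e j) * (\<Sum>i\<in>UNIV. hupbar C j i q * e i))"
      unfolding v_def by (subst sum.swap) (simp add: sum_distrib_left mult_ac)
    also have "\<dots> = 0" using h2 by simp
    finally show False using pos by simp
  qed
qed

section \<open>Vanishing of h^{jr}\<close>

lemma hupup_eq_dirD2:
  assumes cart: "complex_cartan_space U C" and q: "q \<in> nonzero_cotangent U"
  defines "M \<equiv> \<lambda>v w. dirD (\<lambda>y. dirD (Hf C) y v) q w"
  shows "hupup C j r q = (M (0, axis r 1) (0, axis j 1) - \<i> * M (0, axis r \<i>) (0, axis j 1)
     - \<i> * (M (0, axis r 1) (0, axis j \<i>) - \<i> * M (0, axis r \<i>) (0, axis j \<i>))) / 4"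
proof -
  have o: "open (nonzero_cotangent U)" using open_nonzero_cotangent[OF cart] .
  have sm: "smooth_on (nonzero_cotangent U) (Hf C)" using smooth_on_Hf[OF cart] .
  have d: "(\<lambda>y. dirD (Hf C) y v) differentiable at q" for v
    using smooth_on_imp_differentiable[OF o smooth_on_dirD[OF sm] q] .
  have e: "wzeta r (Hf C) = (\<lambda>y. (dirD (Hf C) y (0, axis r 1) - \<i> * dirD (Hf C) y (0, axis r \<i>)) / 2)"
    by (auto simp: wzeta_def)
  show ?thesis unfolding hupup_def wzeta_def[of j] e M_def
    by (simp add: dirD_half_combination[OF d d] field_simps)
qed

lemma hupup_sym:
  assumes cart: "complex_cartan_space U C" and q: "q \<in> nonzero_cotangent U"
  shows "hupup C j r q = hupup C r j q"
proof -
  have o: "open (nonzero_cotangent U)" using open_nonzero_cotangent[OF cart] .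
  have sm: "smooth_on (nonzero_cotangent U) (Hf C)" using smooth_on_Hf[OF cart] .
  have sw: "dirD (\<lambda>y. dirD (Hf C) y v) q w = dirD (\<lambda>y. dirD (Hf C) y w) q v" for v w
    using smooth_on_dirD_commute[OF o q sm] .
  show ?thesis unfolding hupup_eq_dirD2[OF cart q]
    by (simp add: sw[of "(0, axis r 1)" "(0, axis j 1)"] sw[of "(0, axis r \<i>)" "(0, axis j 1)"]
      sw[of "(0, axis r 1)" "(0, axis j \<i>)"] sw[of "(0, axis r \<i>)" "(0, axis j \<i>)"] algebra_simps)
qed

lemma hlow_form_positive:
  assumes cart: "complex_cartan_space U C" and q: "q \<in> nonzero_cotangent U" and y: "y \<noteq> 0"
  shows "0 < Re (\<Sum>r\<in>UNIV. \<Sum>a\<in>UNIV. hlow C r a q * cnj (y $ a) * y $ r)"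
proof -
  let ?P = "\<lambda>j i. hupbar C j i q" and ?L = "\<lambda>j i. hlow C j i q"
  define x where "x = (\<lambda>a. \<Sum>r\<in>UNIV. y $ r * ?L r a)"
  have yx: "y $ b = (\<Sum>a\<in>UNIV. x a * ?P a b)" for b
  proof -
    have "(\<Sum>a\<in>UNIV. x a * ?P a b) = (\<Sum>a\<in>UNIV. \<Sum>r\<in>UNIV. y $ r * (?L r a * ?P a b))"
      unfolding x_def by (simp add: sum_distrib_left sum_distrib_right mult_ac)
    also have "\<dots> = (\<Sum>r\<in>UNIV. y $ r * (\<Sum>a\<in>UNIV. ?L r a * ?P a b))"
      by (subst sum.swap) (simp add: sum_distrib_left)
    also have "\<dots> = y $ b" by (simp add: hlow_hupbar[OF cart q] mult.commute)
    finally show ?thesis by simp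
  qed
  define X where "X = (\<chi> a. cnj (x a))"
  have "X \<noteq> 0"
  proof
    assume "X = 0"
    then have "x a = 0" for a unfolding X_def by (simp add: vec_eq_iff)
    then show False using y yx by (simp add: vec_eq_iff)
  qed
  have "(\<Sum>r\<in>UNIV. \<Sum>a\<in>UNIV. ?L r a * cnj (y $ a) * y $ r) = (\<Sum>a\<in>UNIV. cnj (y $ a) * x a)"
    unfolding x_def by (subst sum.swap) (simp add: sum_distrib_left mult_ac)
  also have "\<dots> = (\<Sum>a\<in>UNIV. \<Sum>b\<in>UNIV. x a * cnj (x b) * cnj (?P b a))"
    unfolding yx by (simp add: sum_distrib_left sum_distrib_right mult_ac)
  also have "\<dots> = (\<Sum>a\<in>UNIV. \<Sum>b\<in>UNIV. ?P a b * cnj (x b) * x a)"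
  proof -
    have "cnj (?P b a) = ?P a b" for a b using hupbar_hermitian[OF cart q, of a b] by simp
    then show ?thesis by (simp add: mult_ac)
  qed
  also have "\<dots> = (\<Sum>i\<in>UNIV. \<Sum>j\<in>UNIV. ?P j i * X $ i * cnj (X $ j))"
    unfolding X_def by (subst sum.swap) simp
  finally show ?thesis using hupbar_form_positive(2)[OF cart q \<open>X \<noteq> 0\<close>] by simp
qed

lemma A_hyp_hlow_form:
  fixes q :: "'n::finite cpt"
  assumes cart: "complex_cartan_space U C" and hyp: "A_hyp U C" and q: "q \<in> nonzero_cotangent U"
  shows "(\<Sum>r\<in>UNIV. \<Sum>a\<in>UNIV. hlow C r a q * cnj (hupup C a c q) * hupup C j r q) = 0"
proof -
  let ?P = "\<lambda>j i. hupbar C j i q" and ?L = "\<lambda>j i. hlow C j i q" and ?S = "\<lambda>j i. hupup C j i q"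
  have A: "(\<Sum>r\<in>UNIV. Akr C k r q * ?S j r) = 0" for k
    using hyp q unfolding A_hyp_def nonzero_cotangent_iff by (cases q) auto
  have "0 = (\<Sum>k\<in>UNIV. ?P c k * (\<Sum>r\<in>UNIV. Akr C k r q * ?S j r))" using A by simp
  also have "\<dots> = (\<Sum>k\<in>UNIV. \<Sum>r\<in>UNIV. \<Sum>a\<in>UNIV. \<Sum>m\<in>UNIV. - (?P c k * ?L k m * (?L r a * cnj (?S a m) * ?S j r)))"
    unfolding Akr_def by (simp add: sum_distrib_left sum_distrib_right sum_negf mult_ac)
  also have "\<dots> = (\<Sum>r\<in>UNIV. \<Sum>a\<in>UNIV. \<Sum>m\<in>UNIV. \<Sum>k\<in>UNIV. - (?P c k * ?L k m * (?L r a * cnj (?S a m) * ?S j r)))"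
    by (rule sum_rotate4)
  also have "\<dots> = (\<Sum>r\<in>UNIV. \<Sum>a\<in>UNIV. \<Sum>m\<in>UNIV. - ((\<Sum>k\<in>UNIV. ?P c k * ?L k m) * (?L r a * cnj (?S a m) * ?S j r)))"
    by (simp add: sum_distrib_right sum_negf)
  also have "\<dots> = - (\<Sum>r\<in>UNIV. \<Sum>a\<in>UNIV. ?L r a * cnj (?S a c) * ?S j r)"
    by (simp add: hupbar_hlow[OF cart q] sum_negf)
  finally show ?thesis by simp
qed

lemma hupup_zero:
  assumes cart: "complex_cartan_space U C" and hyp: "A_hyp U C" and q: "q \<in> nonzero_cotangent U"
  shows "hupup C j r q = 0"
proof -
  define y where "y = (\<chi> r. hupup C j r q)"
  have "(\<Sum>r\<in>UNIV. \<Sum>a\<in>UNIV. hlow C r a q * cnj (y $ a) * y $ r) = 0"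
    using A_hyp_hlow_form[OF cart hyp q, of j j] hupup_sym[OF cart q, of _ j] unfolding y_def by simp
  then have "y = 0" using hlow_form_positive[OF cart q] by fastforce
  then show ?thesis unfolding y_def by (simp add: vec_eq_iff)
qed

lemma Akr_zero:
  assumes cart: "complex_cartan_space U C" and hyp: "A_hyp U C" and q: "q \<in> nonzero_cotangent U"
  shows "Akr C k r q = 0"
  unfolding Akr_def using hupup_zero[OF cart hyp q] by simp

section \<open>Homogeneity of H\<close>

lemma Hf_homogeneous:
  assumes cart: "complex_cartan_space U C" and z: "z \<in> U"
  shows "Hf C (z, c *s w) = of_real ((cmod c)\<^sup>2) * Hf C (z, w)"
  using cart z unfolding complex_cartan_space_def Hf_def by (simp add: power_mult_distrib)

lemma dirD_Hf_fibre_scale: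
  assumes cart: "complex_cartan_space U C" and z: "z \<in> U" and w: "w \<noteq> 0" and c: "c \<noteq> 0"
  shows "dirD (Hf C) (z, c *s w) (0, axis k u)
    = of_real ((cmod c)\<^sup>2) * dirD (Hf C) (z, w) (0, axis k (u / c))"
proof -
  let ?H = "Hf C" and ?K = "complex_of_real ((cmod c)\<^sup>2)"
  have "(z, w) \<in> nonzero_cotangent U" using z w by (simp add: nonzero_cotangent_iff)
  then have dH: "?H differentiable at (z, w)" using differentiable_Hf[OF cart] by blast
  have e: "(\<lambda>t. ?H ((z, c *s w) + t *\<^sub>R (0, axis k u)))
      = (\<lambda>t. ?K * ?H ((z, w) + t *\<^sub>R (0, axis k (u / c))))"
  proof
    fix t :: real
    have "c *s w + t *\<^sub>R axis k u = c *s (w + t *\<^sub>R axis k (u / c))"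
      using c by (simp add: vec_eq_iff axis_def scaleR_conv_of_real field_simps)
    then have "(z, c *s w) + t *\<^sub>R (0, axis k u) = (z, c *s (w + t *\<^sub>R axis k (u / c)))" by simp
    moreover have "(z, w) + t *\<^sub>R (0, axis k (u / c)) = (z, w + t *\<^sub>R axis k (u / c))" by simp
    ultimately show "?H ((z, c *s w) + t *\<^sub>R (0, axis k u)) = ?K * ?H ((z, w) + t *\<^sub>R (0, axis k (u / c)))"
      by (simp only:) (rule Hf_homogeneous[OF cart z])
  qed
  have "((\<lambda>t. ?H ((z, w) + t *\<^sub>R (0, axis k (u / c)))) has_vector_derivative
      dirD ?H (z, w) (0, axis k (u / c))) (at 0)"
    using has_vector_derivative_dirD[of ?H "(z,w)" 0 "(0, axis k (u / c))"] dH by simp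
  from has_vector_derivative_mult_right[OF this, of ?K]
  show ?thesis unfolding dirD_def[of _ "(z, c *s w)"] e by (rule vector_derivative_at)
qed

lemma wzetabar_Hf_homogeneous:
  assumes cart: "complex_cartan_space U C" and z: "z \<in> U" and w: "w \<noteq> 0" and c: "c \<noteq> 0"
  shows "wzetabar k (Hf C) (z, c *s w) = c * wzetabar k (Hf C) (z, w)"
proof -
  let ?H = "Hf C" and ?K = "complex_of_real ((cmod c)\<^sup>2)"
  have "(z, w) \<in> nonzero_cotangent U" using z w by (simp add: nonzero_cotangent_iff)
  then have dH: "?H differentiable at (z, w)" using differentiable_Hf[OF cart] by blast
  have "wzetabar k ?H (z, c *s w)
      = ?K * (dirD ?H (z, w) (0, axis k (1 / c)) + \<i> * dirD ?H (z, w) (0, axis k (\<i> / c))) / 2"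
    by (simp add: wzetabar_def dirD_Hf_fibre_scale[OF cart z w c] field_simps)
  also have "\<dots> = ?K * (wzetabar k ?H (z, w) / cnj c)"
    using c by (simp add: dirD_fibre_axis[OF dH] field_simps complex_cnj_divide)
  also have "\<dots> = c * wzetabar k ?H (z, w)"
    using c complex_norm_square[of c] by (simp add: field_simps power2_eq_square)
  finally show ?thesis .
qed

lemma has_vector_derivative_affine_multiple: "((\<lambda>t::real. (1 + complex_of_real t * u) * K) has_vector_derivative (u * K)) (at x)"
proof -
  have "((\<lambda>t::real. complex_of_real t) has_vector_derivative 1) (at x)"
    using has_vector_derivative_of_real[OF DERIV_ident] by simp
  then have "((\<lambda>t::real. complex_of_real t * (u * K)) has_vector_derivative (1 * (u * K))) (at x)"
    by (rule has_vector_derivative_mult_left)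
  then have "((\<lambda>t::real. K + complex_of_real t * (u * K)) has_vector_derivative (u * K)) (at x)"
    using has_vector_derivative_add[OF has_vector_derivative_const[of K]] by fastforce
  moreover have "(\<lambda>t::real. (1 + complex_of_real t * u) * K) = (\<lambda>t::real. K + complex_of_real t * (u * K))"
    by (auto simp: algebra_simps)
  ultimately show ?thesis by simp
qed

lemma dirD_wzetabar_Hf_radial:
  assumes cart: "complex_cartan_space U C" and q: "q \<in> nonzero_cotangent U"
  shows "dirD (wzetabar k (Hf C)) q (0, c *s snd q) = c * wzetabar k (Hf C) q"
proof -
  obtain z w where qz: "q = (z, w)" and z: "z \<in> U" and w: "w \<noteq> 0"
    using q by (cases q) (auto simp: nonzero_cotangent_iff)
  let ?G = "wzetabar k (Hf C)"
  have "((\<lambda>t. 1 + complex_of_real t * c) \<longlongrightarrow> 1 + complex_of_real 0 * c) (nhds 0)"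
    by (intro tendsto_intros filterlim_ident)
  then have "eventually (\<lambda>t. 1 + complex_of_real t * c \<noteq> 0) (nhds 0)"
    by (rule tendsto_imp_eventually_ne) simp
  then have "eventually (\<lambda>t. t \<in> UNIV \<longrightarrow>
      ?G (q + t *\<^sub>R (0, c *s snd q)) = (1 + complex_of_real t * c) * ?G q) (nhds 0)"
  proof eventually_elim
    case (elim t)
    have "w + t *\<^sub>R (c *s w) = (1 + complex_of_real t * c) *s w"
      by (simp add: vec_eq_iff) (simp add: scaleR_conv_of_real algebra_simps)
    then show ?case using wzetabar_Hf_homogeneous[OF cart z w elim] qz by simp
  qed
  then have "dirD ?G q (0, c *s snd q)
      = vector_derivative (\<lambda>t. (1 + complex_of_real t * c) * ?G q) (at 0)"
    unfolding dirD_def by (rule vector_derivative_cong_eq) auto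
  then show ?thesis using has_vector_derivative_affine_multiple vector_derivative_at by metis
qed

lemma hupbar_Euler:
  assumes cart: "complex_cartan_space U C" and q: "q \<in> nonzero_cotangent U"
  shows "(\<Sum>l\<in>UNIV. hupbar C k l q * snd q $ l) = wzetabar k (Hf C) q"
proof -
  let ?G = "wzetabar k (Hf C)" and ?w = "snd q"
  have dG: "?G differentiable at q" using differentiable_wzetabar_Hf[OF cart q] .
  have "dirD ?G q (0, ?w) = ?G q" "dirD ?G q (0, \<i> *s ?w) = \<i> * ?G q"
    using dirD_wzetabar_Hf_radial[OF cart q, of k 1] dirD_wzetabar_Hf_radial[OF cart q, of k \<i>]
    by simp_all
  then have "?G q = (dirD ?G q (0, ?w) - \<i> * dirD ?G q (0, \<i> *s ?w)) / 2" by simp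
  also have "\<dots> = (\<Sum>l\<in>UNIV. ((wzeta l ?G q * ?w $ l + wzetabar l ?G q * cnj (?w $ l))
          - \<i> * (wzeta l ?G q * (\<i> * ?w $ l) + wzetabar l ?G q * cnj (\<i> * ?w $ l))) / 2)"
    using dirD_wirtinger[OF dG, of 0 ?w] dirD_wirtinger[OF dG, of 0 "\<i> *s ?w"]
    by (simp add: sum_subtractf sum_distrib_left right_diff_distrib flip: sum_divide_distrib)
  also have "\<dots> = (\<Sum>l\<in>UNIV. wzeta l ?G q * ?w $ l)"
    by (intro sum.cong refl) (simp add: algebra_simps)
  finally show ?thesis by (simp add: hupbar_def)
qed

lemma zetaup_eq_cnj_wzetabar_Hf:
  assumes cart: "complex_cartan_space U C" and q: "q \<in> nonzero_cotangent U"
  shows "zetaup C k q = cnj (wzetabar k (Hf C) q)"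
proof -
  have "zetaup C k q = (\<Sum>j\<in>UNIV. cnj (hupbar C k j q * snd q $ j))"
    unfolding zetaup_def by (intro sum.cong refl) (subst hupbar_hermitian[OF cart q], simp)
  also have "\<dots> = cnj (\<Sum>j\<in>UNIV. hupbar C k j q * snd q $ j)" by (simp add: cnj_sum)
  also have "\<dots> = cnj (wzetabar k (Hf C) q)" using hupbar_Euler[OF cart q, of k] by simp
  finally show ?thesis .
qed

lemma Hf_cnj: "(\<lambda>x. cnj (Hf C x)) = Hf C"
  by (auto simp: Hf_def)

lemma cnj_wzetabar_Hf:
  assumes cart: "complex_cartan_space U C" and q: "q \<in> nonzero_cotangent U"
  shows "cnj (wzetabar k (Hf C) q) = wzeta k (Hf C) q"
  using wirtinger_cnj(4)[OF differentiable_Hf[OF cart q], of k] unfolding Hf_cnj by simp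

section \<open>Derivatives of zeta^k\<close>

lemma differentiable_zetaup:
  assumes cart: "complex_cartan_space U C" and q: "q \<in> nonzero_cotangent U"
  shows "zetaup C k differentiable at q"
  unfolding zetaup_def[abs_def]
  by (intro differentiable_sum) (auto intro!: differentiable_mult differentiable_hupbar[OF cart q] differentiable_cnj_fibre_coord)

lemma wzeta_zetaup:
  assumes cart: "complex_cartan_space U C" and hyp: "A_hyp U C" and q: "q \<in> nonzero_cotangent U"
  shows "wzeta a (zetaup C k) q = 0"
proof -
  have "wzeta a (zetaup C k) q = wzeta a (wzeta k (Hf C)) q"
    by (rule wzeta_cong[OF open_nonzero_cotangent[OF cart] q]) (simp add: zetaup_eq_cnj_wzetabar_Hf[OF cart] cnj_wzetabar_Hf[OF cart])
  also have "\<dots> = hupup C a k q" by (simp add: hupup_def)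
  also have "\<dots> = 0" by (rule hupup_zero[OF cart hyp q])
  finally show ?thesis .
qed

lemma wzetabar_zetaup:
  assumes cart: "complex_cartan_space U C" and q: "q \<in> nonzero_cotangent U"
  shows "wzetabar a (zetaup C k) q = hupbar C a k q"
proof -
  have "wzetabar a (zetaup C k) q = wzetabar a (\<lambda>x. cnj (wzetabar k (Hf C) x)) q"
    by (rule wzetabar_cong[OF open_nonzero_cotangent[OF cart] q]) (simp add: zetaup_eq_cnj_wzetabar_Hf[OF cart])
  also have "\<dots> = cnj (wzeta a (wzetabar k (Hf C)) q)" by (rule wirtinger_cnj(4)[OF differentiable_wzetabar_Hf[OF cart q]])
  also have "\<dots> = cnj (hupbar C k a q)" by (simp add: hupbar_def)
  also have "\<dots> = hupbar C a k q" using hupbar_hermitian[OF cart q, of a k] by simp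
  finally show ?thesis .
qed

lemma wzbar_zetaup_expand:
  assumes cart: "complex_cartan_space U C" and q: "q \<in> nonzero_cotangent U"
  shows "wzbar r (zetaup C k) q = cnj (\<Sum>l\<in>UNIV. wz r (hupbar C k l) q * snd q $ l)"
proof -
  have o: "open (nonzero_cotangent U)" using open_nonzero_cotangent[OF cart] .
  have "wzbar r (zetaup C k) q = wzbar r (\<lambda>x. cnj (wzetabar k (Hf C) x)) q"
    by (rule wzbar_cong[OF o q]) (simp add: zetaup_eq_cnj_wzetabar_Hf[OF cart])
  also have "\<dots> = cnj (wz r (wzetabar k (Hf C)) q)" by (rule wirtinger_cnj(2)[OF differentiable_wzetabar_Hf[OF cart q]])
  also have "wz r (wzetabar k (Hf C)) q = wz r (\<lambda>x. \<Sum>l\<in>UNIV. hupbar C k l x * snd x $ l) q"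
    by (rule wz_cong[OF o q]) (simp add: hupbar_Euler[OF cart])
  also have "\<dots> = (\<Sum>l\<in>UNIV. wz r (hupbar C k l) q * snd q $ l)"
    by (simp add: wirtinger_sum wirtinger_mult differentiable_hupbar[OF cart q] differentiable_fibre_coord wirtinger_fibre_coord)
  finally show ?thesis .
qed

lemma wz_wzeta_zetaup:
  assumes cart: "complex_cartan_space U C" and q: "q \<in> nonzero_cotangent U"
  shows "wz l (zetaup C k) q = (\<Sum>b\<in>UNIV. wz l (hupbar C b k) q * cnj (snd q $ b))"
    "wzeta l (zetaup C k) q = (\<Sum>b\<in>UNIV. wzeta l (hupbar C b k) q * cnj (snd q $ b))"
  unfolding zetaup_def[abs_def]
  by (simp_all add: wirtinger_sum wirtinger_mult differentiable_hupbar[OF cart q] differentiable_cnj_fibre_coord wirtinger_fibre_coord)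

lemma wzbar_zetaup:
  assumes cart: "complex_cartan_space U C" and q: "q \<in> nonzero_cotangent U"
  shows "wzbar r (zetaup C k) q = - (\<Sum>m\<in>UNIV. hupbar C m k q * cnj (Nc C m r q))"
proof -
  let ?P = "\<lambda>a b. hupbar C a b q" and ?L = "\<lambda>a b. hlow C a b q" and ?W = "\<lambda>a l. wz r (hupbar C a l) q"
  let ?s = "\<lambda>l. snd q $ l"
  have "- (\<Sum>m\<in>UNIV. ?P m k * cnj (Nc C m r q))
      = cnj (\<Sum>m\<in>UNIV. cnj (?P m k) * (\<Sum>a\<in>UNIV. \<Sum>l\<in>UNIV. ?L m a * ?W a l * ?s l))"
    unfolding Nc_def by (simp add: cnj_sum sum_negf)
  also have "\<dots> = cnj (\<Sum>m\<in>UNIV. \<Sum>a\<in>UNIV. \<Sum>l\<in>UNIV. ?P k m * ?L m a * (?W a l * ?s l))"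
  proof -
    have herm: "cnj (?P m k) = ?P k m" for m using hupbar_hermitian[OF cart q, of k m] by simp
    show ?thesis by (simp only: herm sum_distrib_left mult.assoc)
  qed
  also have "\<dots> = cnj (\<Sum>a\<in>UNIV. \<Sum>l\<in>UNIV. \<Sum>m\<in>UNIV. ?P k m * ?L m a * (?W a l * ?s l))"
    by (rule arg_cong[where f=cnj], rule sum_rotate3)
  also have "\<dots> = cnj (\<Sum>a\<in>UNIV. \<Sum>l\<in>UNIV. (\<Sum>m\<in>UNIV. ?P k m * ?L m a) * (?W a l * ?s l))"
    by (simp only: sum_distrib_right)
  also have "\<dots> = cnj (\<Sum>a\<in>UNIV. \<Sum>l\<in>UNIV. (if k = a then 1 else 0) * (?W a l * ?s l))"
    by (simp only: hupbar_hlow[OF cart q])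
  also have "\<dots> = cnj (\<Sum>a\<in>UNIV. (if k = a then 1 else 0) * (\<Sum>l\<in>UNIV. ?W a l * ?s l))"
    by (simp only: sum_distrib_left)
  also have "\<dots> = cnj (\<Sum>l\<in>UNIV. ?W k l * ?s l)"
    by (simp only: sum_kronecker(1))
  also have "\<dots> = wzbar r (zetaup C k) q" by (rule wzbar_zetaup_expand[OF cart q, symmetric])
  finally show ?thesis by simp
qed

lemma hupbar_wirtinger_hlow:
  assumes cart: "complex_cartan_space U C" and q: "q \<in> nonzero_cotangent U"
  shows "(\<Sum>m\<in>UNIV. hupbar C m k q * wz l (hlow C j m) q) = - (\<Sum>b\<in>UNIV. hlow C j b q * wz l (hupbar C b k) q)"
    "(\<Sum>m\<in>UNIV. hupbar C m k q * wzeta l (hlow C j m) q) = - (\<Sum>b\<in>UNIV. hlow C j b q * wzeta l (hupbar C b k) q)"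
proof -
  have o: "open (nonzero_cotangent U)" using open_nonzero_cotangent[OF cart] .
  have e: "\<And>x. x \<in> nonzero_cotangent U \<Longrightarrow> (\<Sum>m\<in>UNIV. hlow C j m x * hupbar C m k x) = (if j = k then 1 else 0)"
    using hlow_hupbar[OF cart] by blast
  have "wz l (\<lambda>x. \<Sum>m\<in>UNIV. hlow C j m x * hupbar C m k x) q = wz l (\<lambda>x. if j = k then 1 else 0) q"
    by (rule wz_cong[OF o q e])
  moreover have "wz l (\<lambda>x. if j = k then 1 else 0) q = 0" by (simp add: wz_def dirD_const)
  moreover have "wz l (\<lambda>x. \<Sum>m\<in>UNIV. hlow C j m x * hupbar C m k x) q
     = (\<Sum>m\<in>UNIV. wz l (hlow C j m) q * hupbar C m k q + hlow C j m q * wz l (hupbar C m k) q)"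
    by (simp add: wirtinger_sum wirtinger_mult differentiable_hupbar[OF cart q] differentiable_hlow[OF cart q])
  ultimately have "(\<Sum>m\<in>UNIV. wz l (hlow C j m) q * hupbar C m k q + hlow C j m q * wz l (hupbar C m k) q) = 0"
    by simp
  then show "(\<Sum>m\<in>UNIV. hupbar C m k q * wz l (hlow C j m) q) = - (\<Sum>b\<in>UNIV. hlow C j b q * wz l (hupbar C b k) q)"
    by (simp add: sum.distrib mult_ac eq_neg_iff_add_eq_0)
  have "wzeta l (\<lambda>x. \<Sum>m\<in>UNIV. hlow C j m x * hupbar C m k x) q = wzeta l (\<lambda>x. if j = k then 1 else 0) q"
    by (rule wzeta_cong[OF o q e])
  moreover have "wzeta l (\<lambda>x. if j = k then 1 else 0) q = 0" by (simp add: wzeta_def dirD_const)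
  moreover have "wzeta l (\<lambda>x. \<Sum>m\<in>UNIV. hlow C j m x * hupbar C m k x) q
     = (\<Sum>m\<in>UNIV. wzeta l (hlow C j m) q * hupbar C m k q + hlow C j m q * wzeta l (hupbar C m k) q)"
    by (simp add: wirtinger_sum wirtinger_mult differentiable_hupbar[OF cart q] differentiable_hlow[OF cart q])
  ultimately have "(\<Sum>m\<in>UNIV. wzeta l (hlow C j m) q * hupbar C m k q + hlow C j m q * wzeta l (hupbar C m k) q) = 0"
    by simp
  then show "(\<Sum>m\<in>UNIV. hupbar C m k q * wzeta l (hlow C j m) q) = - (\<Sum>b\<in>UNIV. hlow C j b q * wzeta l (hupbar C b k) q)"
    by (simp add: sum.distrib mult_ac eq_neg_iff_add_eq_0)
qed

lemma zetaup_hlow: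
  assumes cart: "complex_cartan_space U C" and q: "q \<in> nonzero_cotangent U"
  shows "(\<Sum>j\<in>UNIV. zetaup C j q * hlow C j b q) = cnj (snd q $ b)"
proof -
  have "(\<Sum>j\<in>UNIV. zetaup C j q * hlow C j b q) = (\<Sum>c\<in>UNIV. cnj (snd q $ c) * (\<Sum>j\<in>UNIV. hupbar C c j q * hlow C j b q))"
    unfolding zetaup_def sum_distrib_right sum_distrib_left by (subst sum.swap) (simp add: mult_ac)
  also have "\<dots> = (\<Sum>c\<in>UNIV. cnj (snd q $ c) * (if c = b then 1 else 0))"
    by (simp only: hupbar_hlow[OF cart q])
  also have "\<dots> = cnj (snd q $ b)" by (rule sum_kronecker(4))
  finally show ?thesis .
qed

lemma zetaup_Hcoef:
  assumes cart: "complex_cartan_space U C" and hyp: "A_hyp U C" and q: "q \<in> nonzero_cotangent U"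
  shows "(\<Sum>j\<in>UNIV. zetaup C j q * Hcoef C k j l q) = - wz l (zetaup C k) q"
proof -
  let ?P = "\<lambda>a b. hupbar C a b q" and ?L = "\<lambda>a b. hlow C a b q" and ?z = "\<lambda>j. zetaup C j q"
  have H: "Hcoef C k j l q = (\<Sum>m\<in>UNIV. ?P m k * wz l (hlow C j m) q)
      + (\<Sum>a\<in>UNIV. Nc C a l q * (\<Sum>m\<in>UNIV. ?P m k * wzeta a (hlow C j m) q))" for j
    unfolding Hcoef_def deltastar_def
    by (simp add: distrib_left sum.distrib sum_distrib_left mult_ac) (subst sum.swap, simp add: mult_ac)
  have H2: "Hcoef C k j l q = - (\<Sum>b\<in>UNIV. ?L j b * wz l (hupbar C b k) q)
      - (\<Sum>a\<in>UNIV. Nc C a l q * (\<Sum>b\<in>UNIV. ?L j b * wzeta a (hupbar C b k) q))" for j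
    unfolding H hupbar_wirtinger_hlow[OF cart q] by (simp add: sum_negf)
  have c1: "(\<Sum>j\<in>UNIV. ?z j * (\<Sum>b\<in>UNIV. ?L j b * X b)) = (\<Sum>b\<in>UNIV. cnj (snd q $ b) * X b)" for X
  proof -
    have "(\<Sum>j\<in>UNIV. ?z j * (\<Sum>b\<in>UNIV. ?L j b * X b)) = (\<Sum>b\<in>UNIV. (\<Sum>j\<in>UNIV. ?z j * ?L j b) * X b)"
      by (simp add: sum_distrib_left sum_distrib_right mult_ac) (subst sum.swap, simp)
    then show ?thesis by (simp add: zetaup_hlow[OF cart q])
  qed
  have "(\<Sum>j\<in>UNIV. ?z j * Hcoef C k j l q)
     = - (\<Sum>j\<in>UNIV. ?z j * (\<Sum>b\<in>UNIV. ?L j b * wz l (hupbar C b k) q))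
       - (\<Sum>a\<in>UNIV. Nc C a l q * (\<Sum>j\<in>UNIV. ?z j * (\<Sum>b\<in>UNIV. ?L j b * wzeta a (hupbar C b k) q)))"
    unfolding H2 by (simp add: right_diff_distrib sum_subtractf sum_negf sum_distrib_left mult_ac)
      (subst (2) sum.swap, simp add: mult_ac)
  also have "\<dots> = - (\<Sum>b\<in>UNIV. cnj (snd q $ b) * wz l (hupbar C b k) q)
       - (\<Sum>a\<in>UNIV. Nc C a l q * (\<Sum>b\<in>UNIV. cnj (snd q $ b) * wzeta a (hupbar C b k) q))"
    by (simp only: c1)
  also have "\<dots> = - wz l (zetaup C k) q"
    using wz_wzeta_zetaup[OF cart q] wzeta_zetaup[OF cart hyp q] by (simp add: mult.commute)
  finally show ?thesis .
qed

lemma Hcoef_quadratic_zetaup: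
  assumes cart: "complex_cartan_space U C" and hyp: "A_hyp U C" and q: "q \<in> nonzero_cotangent U"
  shows "(\<Sum>j\<in>UNIV. \<Sum>l\<in>UNIV. Hcoef C k j l q * zetaup C j q * zetaup C l q)
       = - (\<Sum>l\<in>UNIV. wz l (zetaup C k) q * zetaup C l q)"
proof -
  have "(\<Sum>j\<in>UNIV. \<Sum>l\<in>UNIV. Hcoef C k j l q * zetaup C j q * zetaup C l q)
      = (\<Sum>l\<in>UNIV. \<Sum>j\<in>UNIV. Hcoef C k j l q * zetaup C j q * zetaup C l q)"
    by (rule sum.swap)
  also have "\<dots> = (\<Sum>l\<in>UNIV. (\<Sum>j\<in>UNIV. zetaup C j q * Hcoef C k j l q) * zetaup C l q)"
    by (simp add: sum_distrib_right sum_distrib_left mult_ac)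
  also have "\<dots> = - (\<Sum>l\<in>UNIV. wz l (zetaup C k) q * zetaup C l q)"
    by (simp add: zetaup_Hcoef[OF cart hyp q] sum_negf)
  finally show ?thesis .
qed

section \<open>Complex geodesic curves\<close>

lemma Theta_rearrangement:
  fixes P N :: "'n::finite \<Rightarrow> 'n \<Rightarrow> complex" and zu dw :: "'n \<Rightarrow> complex"
  shows "(\<Sum>i\<in>UNIV. (- (\<Sum>m\<in>UNIV. P m k * cnj (N m i))) * cnj (zu i) + P i k * cnj (dw i))
    = (\<Sum>m\<in>UNIV. \<Sum>r\<in>UNIV. P m k * (cnj (N r m) - cnj (N m r)) * cnj (zu r))
      + (\<Sum>i\<in>UNIV. P i k * cnj (dw i - (\<Sum>j\<in>UNIV. N j i * zu j)))"
proof -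
  have s1: "(\<Sum>m\<in>UNIV. \<Sum>r\<in>UNIV. P m k * cnj (N r m) * cnj (zu r)) = (\<Sum>i\<in>UNIV. P i k * (\<Sum>j\<in>UNIV. cnj (N j i) * cnj (zu j)))"
    by (simp add: sum_distrib_left mult_ac)
  have s2: "(\<Sum>i\<in>UNIV. (\<Sum>m\<in>UNIV. P m k * cnj (N m i)) * cnj (zu i)) = (\<Sum>m\<in>UNIV. \<Sum>r\<in>UNIV. P m k * cnj (N m r) * cnj (zu r))"
    by (subst sum.swap) (simp add: sum_distrib_right sum_distrib_left mult_ac)
  have L: "(\<Sum>i\<in>UNIV. (- (\<Sum>m\<in>UNIV. P m k * cnj (N m i))) * cnj (zu i) + P i k * cnj (dw i))
     = - (\<Sum>i\<in>UNIV. (\<Sum>m\<in>UNIV. P m k * cnj (N m i)) * cnj (zu i)) + (\<Sum>i\<in>UNIV. P i k * cnj (dw i))"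
    by (simp add: sum.distrib sum_negf sum_subtractf)
  have R1: "(\<Sum>m\<in>UNIV. \<Sum>r\<in>UNIV. P m k * (cnj (N r m) - cnj (N m r)) * cnj (zu r))
     = (\<Sum>m\<in>UNIV. \<Sum>r\<in>UNIV. P m k * cnj (N r m) * cnj (zu r)) - (\<Sum>m\<in>UNIV. \<Sum>r\<in>UNIV. P m k * cnj (N m r) * cnj (zu r))"
    by (simp add: left_diff_distrib right_diff_distrib sum_subtractf)
  have R2: "(\<Sum>i\<in>UNIV. P i k * cnj (dw i - (\<Sum>j\<in>UNIV. N j i * zu j)))
     = (\<Sum>i\<in>UNIV. P i k * cnj (dw i)) - (\<Sum>i\<in>UNIV. P i k * (\<Sum>j\<in>UNIV. cnj (N j i) * cnj (zu j)))"
    by (simp add: right_diff_distrib sum_subtractf cnj_sum)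
  show ?thesis unfolding L R1 R2 s1 s2 by simp
qed

lemma has_vector_derivative_zetaup_curve:
  fixes z \<zeta> :: "real \<Rightarrow> complex^'n::finite" and s :: real
  defines "q \<equiv> (z s, \<zeta> s)"
    and "z' \<equiv> \<lambda>i. vector_derivative (\<lambda>t. z t $ i) (at s)"
    and "\<zeta>' \<equiv> \<lambda>i. vector_derivative (\<lambda>t. \<zeta> t $ i) (at s)"
  assumes cart: "complex_cartan_space U C" and hyp: "A_hyp U C" and q: "q \<in> nonzero_cotangent U"
    and dz: "\<And>i. (\<lambda>t. z t $ i) differentiable at s"
    and d\<zeta>: "\<And>i. (\<lambda>t. \<zeta> t $ i) differentiable at s"
  shows "((\<lambda>r. zetaup C k (z r, \<zeta> r)) has_vector_derivative
     (\<Sum>i\<in>UNIV. wz i (zetaup C k) q * z' i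
        - (\<Sum>m\<in>UNIV. hupbar C m k q * cnj (Nc C m i q)) * cnj (z' i)
        + hupbar C i k q * cnj (\<zeta>' i))) (at s)"
proof -
  have "((\<lambda>r. zetaup C k (z r, \<zeta> r)) has_vector_derivative
     (\<Sum>i\<in>UNIV. wz i (zetaup C k) q * z' i + wzbar i (zetaup C k) q * cnj (z' i)
        + wzeta i (zetaup C k) q * \<zeta>' i + wzetabar i (zetaup C k) q * cnj (\<zeta>' i))) (at s)"
    using has_vector_derivative_wirtinger_chain[OF dz d\<zeta> differentiable_zetaup[OF cart q[unfolded q_def]]]
    unfolding q_def z'_def \<zeta>'_def .
  then show ?thesis
    using wzeta_zetaup[OF cart hyp q] wzetabar_zetaup[OF cart q] wzbar_zetaup[OF cart q] by simp
qed

lemma geodesic_identity: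
  fixes z \<zeta> :: "real \<Rightarrow> complex^'n::finite"
  assumes cart: "complex_cartan_space U C" and hyp: "A_hyp U C"
    and I: "open I" "s \<in> I" and q: "(z s, \<zeta> s) \<in> nonzero_cotangent U"
    and dz: "\<And>i. (\<lambda>t. z t $ i) differentiable at s"
    and d\<zeta>: "\<And>i. (\<lambda>t. \<zeta> t $ i) differentiable at s"
    and X: "\<forall>r\<in>I. \<forall>k. vector_derivative (\<lambda>t. z t $ k) (at r) = zetaup C k (z r, \<zeta> r)"
  shows "vector_derivative (\<lambda>r. vector_derivative (\<lambda>t. z t $ k) (at r)) (at s)
      + (\<Sum>j\<in>UNIV. \<Sum>l\<in>UNIV. Hcoef C k j l (z s, \<zeta> s) * zetaup C j (z s, \<zeta> s) * zetaup C l (z s, \<zeta> s))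
    = Theta C k (z s, \<zeta> s) + (\<Sum>i\<in>UNIV. hupbar C i k (z s, \<zeta> s) *
        cnj (vector_derivative (\<lambda>t. \<zeta> t $ i) (at s)
          - (\<Sum>j\<in>UNIV. Nc C j i (z s, \<zeta> s) * vector_derivative (\<lambda>t. z t $ j) (at s))))"
proof -
  define q where "q = (z s, \<zeta> s)"
  define zu where "zu = (\<lambda>i. zetaup C i q)"
  define \<zeta>' where "\<zeta>' = (\<lambda>i. vector_derivative (\<lambda>t. \<zeta> t $ i) (at s))"
  have z': "vector_derivative (\<lambda>t. z t $ i) (at s) = zu i" for i using X I unfolding zu_def q_def by blast
  have "eventually (\<lambda>r. r \<in> I) (nhds s)" by (rule eventually_nhds_in_open[OF I])
  then have "eventually (\<lambda>r. r \<in> UNIV \<longrightarrow>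
      vector_derivative (\<lambda>t. z t $ k) (at r) = zetaup C k (z r, \<zeta> r)) (nhds s)"
    by eventually_elim (use X in blast)
  then have "vector_derivative (\<lambda>r. vector_derivative (\<lambda>t. z t $ k) (at r)) (at s)
      = vector_derivative (\<lambda>r. zetaup C k (z r, \<zeta> r)) (at s)"
    by (rule vector_derivative_cong_eq) auto
  also have "\<dots> = (\<Sum>i\<in>UNIV. wz i (zetaup C k) q * zu i
        - (\<Sum>m\<in>UNIV. hupbar C m k q * cnj (Nc C m i q)) * cnj (zu i) + hupbar C i k q * cnj (\<zeta>' i))"
    using vector_derivative_at[OF has_vector_derivative_zetaup_curve[OF cart hyp q dz d\<zeta>]]
    unfolding q_def \<zeta>'_def z' .
  finally have "vector_derivative (\<lambda>r. vector_derivative (\<lambda>t. z t $ k) (at r)) (at s)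
      + (\<Sum>j\<in>UNIV. \<Sum>l\<in>UNIV. Hcoef C k j l q * zu j * zu l)
      = (\<Sum>i\<in>UNIV. (- (\<Sum>m\<in>UNIV. hupbar C m k q * cnj (Nc C m i q))) * cnj (zu i)
          + hupbar C i k q * cnj (\<zeta>' i))"
    unfolding zu_def Hcoef_quadratic_zetaup[OF cart hyp q[folded q_def]]
    by (simp add: sum.distrib sum_subtractf algebra_simps)
  also have "\<dots> = (\<Sum>m\<in>UNIV. \<Sum>r\<in>UNIV. hupbar C m k q * (cnj (Nc C r m q) - cnj (Nc C m r q)) * cnj (zu r))
      + (\<Sum>i\<in>UNIV. hupbar C i k q * cnj (\<zeta>' i - (\<Sum>j\<in>UNIV. Nc C j i q * zu j)))"
    by (rule Theta_rearrangement)
  also have "\<dots> = Theta C k q + (\<Sum>i\<in>UNIV. hupbar C i k q * cnj (\<zeta>' i - (\<Sum>j\<in>UNIV. Nc C j i q * zu j)))"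
    unfolding Theta_def zu_def by simp
  finally show ?thesis unfolding z' \<zeta>'_def by (simp add: zu_def q_def)
qed

lemma second_order_iff_horizontal:
  fixes z \<zeta> :: "real \<Rightarrow> complex^'n::finite"
  assumes cart: "complex_cartan_space U C" and hyp: "A_hyp U C"
    and I: "open I" "s \<in> I" and q: "(z s, \<zeta> s) \<in> nonzero_cotangent U"
    and dz: "\<And>i. (\<lambda>t. z t $ i) differentiable at s"
    and d\<zeta>: "\<And>i. (\<lambda>t. \<zeta> t $ i) differentiable at s"
    and X: "\<forall>r\<in>I. \<forall>k. vector_derivative (\<lambda>t. z t $ k) (at r) = zetaup C k (z r, \<zeta> r)"
  shows "(\<forall>k. vector_derivative (\<lambda>r. vector_derivative (\<lambda>t. z t $ k) (at r)) (at s)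
      + (\<Sum>j\<in>UNIV. \<Sum>l\<in>UNIV. Hcoef C k j l (z s, \<zeta> s) * zetaup C j (z s, \<zeta> s) * zetaup C l (z s, \<zeta> s))
      = Theta C k (z s, \<zeta> s))
    \<longleftrightarrow> (\<forall>i. vector_derivative (\<lambda>t. \<zeta> t $ i) (at s)
          - (\<Sum>j\<in>UNIV. Nc C j i (z s, \<zeta> s) * vector_derivative (\<lambda>t. z t $ j) (at s)) = 0)"
proof -
  let ?E = "\<lambda>i. vector_derivative (\<lambda>t. \<zeta> t $ i) (at s)
    - (\<Sum>j\<in>UNIV. Nc C j i (z s, \<zeta> s) * vector_derivative (\<lambda>t. z t $ j) (at s))"
  note identity = geodesic_identity[OF assms]
  show ?thesis
  proof
    assume "\<forall>k. vector_derivative (\<lambda>r. vector_derivative (\<lambda>t. z t $ k) (at r)) (at s)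
      + (\<Sum>j\<in>UNIV. \<Sum>l\<in>UNIV. Hcoef C k j l (z s, \<zeta> s) * zetaup C j (z s, \<zeta> s) * zetaup C l (z s, \<zeta> s))
      = Theta C k (z s, \<zeta> s)"
    then have "(\<Sum>i\<in>UNIV. hupbar C i k (z s, \<zeta> s) * cnj (?E i)) = 0" for k
      using identity[of k] by simp
    then show "\<forall>i. ?E i = 0" using hupbar_kernel_trivial[OF cart q, of ?E] by blast
  qed (simp add: identity)
qed

theorem theorem5p4:
  fixes U :: "(complex^'n::finite) set"
    and C :: "complex^'n \<Rightarrow> complex^'n \<Rightarrow> real"
    and z \<zeta> :: "real \<Rightarrow> complex^'n"
    and a b :: real
  assumes cartan: "complex_cartan_space U C"
    and hyp: "A_hyp U C"
    and ab: "a < b"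
    and z_smooth: "\<forall>k. smooth_on {a<..<b} (\<lambda>s. z s $ k)"
    and zeta_smooth: "\<forall>k. smooth_on {a<..<b} (\<lambda>s. \<zeta> s $ k)"
    and in_U: "\<forall>s\<in>{a<..<b}. z s \<in> U"
    and nonzero: "\<forall>s\<in>{a<..<b}. \<zeta> s \<noteq> 0"
  shows "(\<forall>s\<in>{a<..<b}. \<forall>k.
            vector_derivative (\<lambda>t. z t $ k) (at s) = zetaup C k (z s, \<zeta> s) \<and>
            vector_derivative (\<lambda>t. \<zeta> t $ k) (at s)
              - (\<Sum>j\<in>UNIV. Nc C j k (z s, \<zeta> s) * vector_derivative (\<lambda>t. z t $ j) (at s))
              = (\<Sum>j\<in>UNIV. Akr C j k (z s, \<zeta> s) * Theta C j (z s, \<zeta> s)))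
     \<longleftrightarrow>
         (\<forall>s\<in>{a<..<b}. \<forall>k.
            vector_derivative (\<lambda>t. z t $ k) (at s) = zetaup C k (z s, \<zeta> s) \<and>
            vector_derivative (\<lambda>r. vector_derivative (\<lambda>t. z t $ k) (at r)) (at s)
              + (\<Sum>j\<in>UNIV. \<Sum>l\<in>UNIV. Hcoef C k j l (z s, \<zeta> s) * zetaup C j (z s, \<zeta> s) * zetaup C l (z s, \<zeta> s))
              = Theta C k (z s, \<zeta> s))"
proof -
  have q: "(z s, \<zeta> s) \<in> nonzero_cotangent U" if "s \<in> {a<..<b}" for s
    using in_U nonzero that by (simp add: nonzero_cotangent_iff)
  have I: "open {a<..<b}" by simp
  have dz: "(\<lambda>t. z t $ i) differentiable at s" and d\<zeta>: "(\<lambda>t. \<zeta> t $ i) differentiable at s"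
    if "s \<in> {a<..<b}" for s i
    using smooth_on_imp_differentiable[OF I _ that] z_smooth zeta_smooth by blast+
  have Akr_Theta: "(\<Sum>j\<in>UNIV. Akr C j k (z s, \<zeta> s) * Theta C j (z s, \<zeta> s)) = 0"
    if "s \<in> {a<..<b}" for s k
    using Akr_zero[OF cartan hyp q[OF that]] by simp
  have "(\<forall>k. vector_derivative (\<lambda>r. vector_derivative (\<lambda>t. z t $ k) (at r)) (at s)
      + (\<Sum>j\<in>UNIV. \<Sum>l\<in>UNIV. Hcoef C k j l (z s, \<zeta> s) * zetaup C j (z s, \<zeta> s) * zetaup C l (z s, \<zeta> s))
      = Theta C k (z s, \<zeta> s))
    \<longleftrightarrow> (\<forall>k. vector_derivative (\<lambda>t. \<zeta> t $ k) (at s)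
          - (\<Sum>j\<in>UNIV. Nc C j k (z s, \<zeta> s) * vector_derivative (\<lambda>t. z t $ j) (at s)) = 0)"
    if "s \<in> {a<..<b}"
      and "\<forall>r\<in>{a<..<b}. \<forall>k. vector_derivative (\<lambda>t. z t $ k) (at r) = zetaup C k (z r, \<zeta> r)" for s
    using second_order_iff_horizontal[OF cartan hyp I that(1) q dz d\<zeta> that(2)] that(1) by blast
  with Akr_Theta show ?thesis by auto
qed

end
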